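(* Let $V\subseteq\mathbb N$ be finite with $|V|\ge2$. The total order $\succ_{\mathrm{fac}}$ on the facets of $\Delta_V$ is a shelling order, with shelling sets $\sigma(F)$ defined recursively by $\sigma(F)=\emptyset$ if $|V|\le 3$; $\sigma(F)=\sigma(F^2)$ if $V(F^1)=\{\min V,\operatorname{min}_2 V\}$; and $\sigma(F)=\sigma(F^2)\cup\{\{\min X,\max X\}:X\in\mathcal L(\mathcal T(F^1))\}$ otherwise. That is: (SH1) if $F\succ_{\mathrm{fac}}G$ then $\sigma(F)\not\subseteq G$; and (SH2) for each $e\in\sigma(F)$ there is a facet $G\prec_{\mathrm{fac}}F$ with $F\setminus G=\{e\}$. In particular $\Delta_V$ is shellable.
   Context: A path $(v_1,\dots,v_k)$ in an edge set is forbidden if $k\ge4$, $v_1=\max(v_1,\dots,v_k)$, $v_k=\max(v_2,\dots,v_k)$, $v_2>v_{k-1}$. $\Delta_V$ is the simplicial complex on $E(K_V)$ whose faces are edge sets containing no forbidden path; it is pure and each facet $F$ has a unique decomposition $F=F^1\sqcup F^2\sqcup\{\{\min V,\max V\}\}$ with $F^i$ a facet of $\Delta_{V(F^i)}$, $V(F^1)\cup V(F^2)=V$, $V(F^1)\cap V(F^2)=\{\max V(F^1)\}$, $\min V\in V(F^1)$, $\max V\in V(F^2)$ ($V(E)$ = vertices incident to $E$). The decomposition tree $\mathcal T(F)$ is the binary tree with root labeled $V$, older subtree $\mathcal T(F^1)$ and younger subtree $\mathcal T(F^2)$ (a single node labeled $V$ if $|V|=2$); its nodes are in bijection with the edges of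 $F$ via $X\mapsto\{\min X,\max X\}$. For a binary tree $T$, $\mathcal L(T)$ is the set of the root and all firstborn nodes (older children); the traversal of $T$ is the preorder list: root, then the traversal of the older subtree, then that of the younger subtree. $\operatorname{min}_2 V$ denotes the second smallest element of $V$. Order finite subsets of $\mathbb N$ by $X\succ Y$ iff $|X|>|Y|$, or $|X|=|Y|$ and $\min(X\triangle Y)\in Y$. For facets $F,G$ of $\Delta_V$ with traversals $(X_1,\dots,X_N)$ of $\mathcal T(F)$ and $(Y_1,\dots,Y_N)$ of $\mathcal T(G)$ ($N=2|V|-3$), let $k$ be the least index with $X_k\neq Y_k$; then $F\succ_{\mathrm{fac}}G$ iff $X_k\succ Y_k$. *)

theory Defs
  imports Main
begin

definition KEdges :: "nat set \<Rightarrow> nat set set" where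
  "KEdges V = {e. \<exists>a b. a \<in> V \<and> b \<in> V \<and> a \<noteq> b \<and> e = {a, b}}"

definition verts :: "nat set set \<Rightarrow> nat set" where
  "verts E = \<Union>E"

definition is_path :: "nat set set \<Rightarrow> nat list \<Rightarrow> bool" where
  "is_path E vs \<longleftrightarrow> vs \<noteq> [] \<and> distinct vs \<and>
     (\<forall>i. Suc i < length vs \<longrightarrow> {vs ! i, vs ! Suc i} \<in> E)"

definition forbidden :: "nat list \<Rightarrow> bool" where
  "forbidden vs \<longleftrightarrow> (let k = length vs in
     k \<ge> 4 \<and> vs ! 0 = Max (set vs) \<and> vs ! (k - 1) = Max (set (tl vs))
     \<and> vs ! 1 > vs ! (k - 2))"

definition is_face :: "nat set \<Rightarrow> nat set set \<Rightarrow> bool" where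
  "is_face V F \<longleftrightarrow> F \<subseteq> KEdges V \<and> \<not> (\<exists>vs. is_path F vs \<and> forbidden vs)"

definition is_facet :: "nat set \<Rightarrow> nat set set \<Rightarrow> bool" where
  "is_facet V F \<longleftrightarrow> is_face V F \<and> (\<forall>G. is_face V G \<and> F \<subseteq> G \<longrightarrow> G = F)"

datatype dtree = Leaf "nat set" | Node "nat set" dtree dtree

fun label :: "dtree \<Rightarrow> nat set" where
  "label (Leaf X) = X"
| "label (Node X _ _) = X"

fun traversal :: "dtree \<Rightarrow> nat set list" where
  "traversal (Leaf X) = [X]"
| "traversal (Node X T1 T2) = X # traversal T1 @ traversal T2"

text \<open>Firstborn nodes (older children) anywhere in the tree, and L(T) = root + firstborns.\<close>
fun firstborns :: "dtree \<Rightarrow> nat set set" where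
  "firstborns (Leaf X) = {}"
| "firstborns (Node X T1 T2) = {label T1} \<union> firstborns T1 \<union> firstborns T2"

definition Lset :: "dtree \<Rightarrow> nat set set" where
  "Lset T = {label T} \<union> firstborns T"

text \<open>The decomposition tree T(F) of a facet F of Delta_V (relational form, following the
  unique decomposition F = F^1 \<squnion> F^2 \<squnion> {{min V, max V}}).\<close>
inductive dtree_of :: "nat set \<Rightarrow> nat set set \<Rightarrow> dtree \<Rightarrow> bool" where
  base: "card V = 2 \<Longrightarrow> is_facet V F \<Longrightarrow> dtree_of V F (Leaf V)"
| step: "\<lbrakk> finite V; card V \<ge> 3; is_facet V F;
           F = F1 \<union> F2 \<union> {{Min V, Max V}};
           F1 \<inter> F2 = {}; {Min V, Max V} \<notin> F1; {Min V, Max V} \<notin> F2;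
           is_facet (verts F1) F1; is_facet (verts F2) F2;
           verts F1 \<union> verts F2 = V; verts F1 \<inter> verts F2 = {Max (verts F1)};
           Min V \<in> verts F1; Max V \<in> verts F2;
           dtree_of (verts F1) F1 T1; dtree_of (verts F2) F2 T2 \<rbrakk>
         \<Longrightarrow> dtree_of V F (Node V T1 T2)"

definition dtree :: "nat set \<Rightarrow> nat set set \<Rightarrow> dtree" where
  "dtree V F = (THE T. dtree_of V F T)"

definition min2 :: "nat set \<Rightarrow> nat" where
  "min2 V = Min (V - {Min V})"

definition edge_of :: "nat set \<Rightarrow> nat set" where
  "edge_of X = {Min X, Max X}"

text \<open>Shelling sets, computed on the decomposition tree (V(F^1) is the label of the older child).\<close>
fun sigma_tree :: "dtree \<Rightarrow> nat set set" where
  "sigma_tree (Leaf X) = {}"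
| "sigma_tree (Node V T1 T2) =
     (if card V \<le> 3 then {}
      else if label T1 = {Min V, min2 V} then sigma_tree T2
      else sigma_tree T2 \<union> edge_of ` Lset T1)"

definition sigma :: "nat set \<Rightarrow> nat set set \<Rightarrow> nat set set" where
  "sigma V F = sigma_tree (dtree V F)"

definition set_gt :: "nat set \<Rightarrow> nat set \<Rightarrow> bool" where
  "set_gt X Y \<longleftrightarrow> card X > card Y \<or>
     (card X = card Y \<and> X \<noteq> Y \<and> Min (X - Y \<union> (Y - X)) \<in> Y)"

definition fac_gt :: "nat set \<Rightarrow> nat set set \<Rightarrow> nat set set \<Rightarrow> bool" where
  "fac_gt V F G \<longleftrightarrow> (let xs = traversal (dtree V F); ys = traversal (dtree V G) in
     \<exists>k. k < length xs \<and> k < length ys \<and> take k xs = take k ys \<and> set_gt (xs ! k) (ys ! k))"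

end

theory Submission
  imports Defs
begin

text \<open>
  A forbidden path starts at its strict maximum \<open>x\<close>, ends at the maximum \<open>z\<close> of the rest,
  and its second vertex exceeds its penultimate one. Hence no forbidden path passes through a cut
  vertex \<open>c\<close> that dominates one side (both ends exceed \<open>c\<close>), and the edge \<open>{min V, max V}\<close>
  lies on none. This makes every facet of \<open>\<Delta>\<^sub>V\<close> the glue of facets of \<open>\<Delta>\<^bsub>V(F\<^sup>1)\<^esub>\<close> and
  \<open>\<Delta>\<^bsub>V(F\<^sup>2)\<^esub>\<close> at \<open>c = max V(F\<^sup>1)\<close> plus \<open>{min V, max V}\<close>, and every such glue a facet; the
  older part \<open>V(F\<^sup>1)\<close> is recovered as \<open>c\<close> together with the vertices connected to \<open>min V\<close> avoiding
  \<open>c\<close> and \<open>max V\<close>, so the decomposition is unique.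

  The traversal of \<open>\<T>(F)\<close> lists the node labels \<open>X\<close>, whose edges \<open>{min X, max X}\<close> make up \<open>F\<close>,
  and all traversals have length \<open>2|V| - 3\<close>; so \<open>\<succ>\<^sub>f\<^sub>a\<^sub>c\<close> is the lexicographic extension of the total order \<open>\<succ>\<close> on
  sets, hence a strict total order. Comparing \<open>F \<succ>\<^sub>f\<^sub>a\<^sub>c G\<close> first compares \<open>V(F\<^sup>1)\<close> with
  \<open>V(G\<^sup>1)\<close>, and (SH1) and (SH2) follow by induction along the decomposition. For (SH1): if
  \<open>V(F\<^sup>1) \<succ> V(G\<^sup>1)\<close>, the edges of \<open>\<L>(\<T>(F\<^sup>1))\<close>, which lie in \<open>\<sigma>(F)\<close>, connect all of
  \<open>V(F\<^sup>1)\<close> and so cannot all lie in \<open>G\<close>. For (SH2): an edge of \<open>\<sigma>(F)\<close> is removed either by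
  recursion inside \<open>F\<^sup>1\<close> or \<open>F\<^sup>2\<close>, or by regluing \<open>F - {e}\<close> along a smaller older part that
  \<open>e\<close> crosses; the latter applies to the root edge of \<open>F\<^sup>1\<close> and to edges of \<open>F\<^sup>1\<close> whose removal
  disconnects \<open>V(F\<^sup>1) - {max V(F\<^sup>1)}\<close>.
\<close>

section \<open>Walks and forbidden walks\<close>

fun walk :: "nat set set \<Rightarrow> nat list \<Rightarrow> bool" where
  "walk E [] \<longleftrightarrow> True"
| "walk E [x] \<longleftrightarrow> True"
| "walk E (x # y # vs) \<longleftrightarrow> {x, y} \<in> E \<and> walk E (y # vs)"

lemma walk_iff_nth: "walk E vs \<longleftrightarrow> (\<forall>i. Suc i < length vs \<longrightarrow> {vs ! i, vs ! Suc i} \<in> E)"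
proof (induction E vs rule: walk.induct)
  case (3 E x y vs)
  have "(\<forall>i. Suc i < length (x # y # vs) \<longrightarrow> {(x # y # vs) ! i, (x # y # vs) ! Suc i} \<in> E)
      \<longleftrightarrow> {x, y} \<in> E \<and> (\<forall>i. Suc i < length (y # vs) \<longrightarrow> {(y # vs) ! i, (y # vs) ! Suc i} \<in> E)"
    by (auto simp: less_Suc_eq_0_disj nth_Cons split: nat.split)
  then show ?case using "3.IH" by simp
qed auto

lemma walk_nthD: "walk E vs \<Longrightarrow> Suc i < length vs \<Longrightarrow> {vs ! i, vs ! Suc i} \<in> E"
  by (simp add: walk_iff_nth)

lemma is_path_iff_walk: "is_path E vs \<longleftrightarrow> vs \<noteq> [] \<and> distinct vs \<and> walk E vs"
  by (simp add: is_path_def walk_iff_nth)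

lemma walk_Cons: "walk E (x # vs) \<longleftrightarrow> walk E vs \<and> (vs \<noteq> [] \<longrightarrow> {x, hd vs} \<in> E)"
  by (cases vs) auto

lemma walk_append:
  "walk E (xs @ ys) \<longleftrightarrow> walk E xs \<and> walk E ys \<and> (xs \<noteq> [] \<longrightarrow> ys \<noteq> [] \<longrightarrow> {last xs, hd ys} \<in> E)"
  by (induction xs) (auto simp: walk_Cons)

lemma walk_mono: "walk E vs \<Longrightarrow> E \<subseteq> E' \<Longrightarrow> walk E' vs"
  by (induction E vs rule: walk.induct) auto

lemma walk_rev: "walk E (rev vs) \<longleftrightarrow> walk E vs"
  by (induction vs) (auto simp: walk_append walk_Cons hd_rev last_rev insert_commute)

lemma KEdges_iff: "{x, y} \<in> KEdges V \<longleftrightarrow> x \<in> V \<and> y \<in> V \<and> x \<noteq> y"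
  unfolding KEdges_def by (auto simp: doubleton_eq_iff)

lemma KEdgesE:
  assumes "e \<in> KEdges V"
  obtains x y where "e = {x, y}" "x \<in> V" "y \<in> V" "x \<noteq> y"
  using assms unfolding KEdges_def by blast

lemma KEdges_mono: "V \<subseteq> W \<Longrightarrow> KEdges V \<subseteq> KEdges W"
  unfolding KEdges_def by blast

lemma KEdges_subset: "e \<in> KEdges V \<Longrightarrow> e \<subseteq> V"
  by (auto elim!: KEdgesE)

lemma KEdges_iff_subset: "e \<in> KEdges W \<Longrightarrow> e \<in> KEdges V \<longleftrightarrow> e \<subseteq> V"
  by (erule KEdgesE) (simp add: KEdges_iff)

lemma KEdges_not_singleton: "e \<in> KEdges V \<Longrightarrow> \<not> e \<subseteq> {c}"
  by (auto elim!: KEdgesE)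

lemma finite_KEdges: "finite V \<Longrightarrow> finite (KEdges V)"
  by (rule finite_subset[of _ "Pow V"]) (auto simp: KEdges_def)

lemma walk_vertices: "walk E vs \<Longrightarrow> length vs \<ge> 2 \<Longrightarrow> E \<subseteq> KEdges V \<Longrightarrow> set vs \<subseteq> V"
proof (induction E vs rule: walk.induct)
  case (3 E x y vs)
  then have "x \<in> V" "y \<in> V" by (auto simp: KEdges_iff)
  then show ?case using 3 by (cases vs) auto
qed auto

text \<open>A forbidden path \<open>(v\<^sub>1, \<dots>, v\<^sub>k)\<close> is written \<open>x # ys @ [z]\<close> with \<open>x = v\<^sub>1\<close> and \<open>z = v\<^sub>k\<close>.\<close>

definition forbidden_walk :: "nat set set \<Rightarrow> nat \<Rightarrow> nat list \<Rightarrow> nat \<Rightarrow> bool" where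
  "forbidden_walk E x ys z \<longleftrightarrow> distinct (x # ys @ [z]) \<and> walk E (x # ys @ [z]) \<and> length ys \<ge> 2
     \<and> z < x \<and> (\<forall>v\<in>set ys. v < z) \<and> last ys < hd ys"

definition forbidden_free :: "nat set set \<Rightarrow> bool" where
  "forbidden_free E \<longleftrightarrow> \<not> (\<exists>x ys z. forbidden_walk E x ys z)"

lemma eq_Max_Cons_iff:
  fixes x :: "'a::linorder"
  assumes "distinct (x # xs)"
  shows "x = Max (set (x # xs)) \<longleftrightarrow> (\<forall>v\<in>set xs. v < x)"
proof (cases "xs = []")
  case False
  then have "Max (set xs) \<noteq> x" using Max_in[of "set xs"] assms by auto
  have max_iff: "x = max x M \<longleftrightarrow> M \<le> x" for M by (auto simp: max_def)
  have "x = Max (set (x # xs)) \<longleftrightarrow> Max (set xs) \<le> x"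
    using False Max_insert[of "set xs" x] max_iff by simp
  also have "\<dots> \<longleftrightarrow> Max (set xs) < x" using \<open>Max (set xs) \<noteq> x\<close> by auto
  also have "\<dots> \<longleftrightarrow> (\<forall>v\<in>set xs. v < x)" using False by (simp add: Max_less_iff)
  finally show ?thesis .
qed simp

lemma forbidden_Cons_snoc:
  assumes dist: "distinct (x # ys @ [z])" and len: "length ys \<ge> 2"
  shows "forbidden (x # ys @ [z]) \<longleftrightarrow> z < x \<and> (\<forall>v\<in>set ys. v < z) \<and> last ys < hd ys"
proof -
  define vs where "vs = x # ys @ [z]"
  have ys: "ys \<noteq> []" using len by auto
  have second: "vs ! 1 = hd ys" using ys by (cases ys) (auto simp: vs_def)
  have penultimate: "vs ! (length vs - 2) = last ys"
    using ys by (cases "length ys") (auto simp: vs_def nth_append last_conv_nth)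
  have first_max: "vs ! 0 = Max (set vs) \<longleftrightarrow> (\<forall>v\<in>set (ys @ [z]). v < x)"
    using eq_Max_Cons_iff[OF dist] by (simp add: vs_def)
  have "z = Max (set (z # ys)) \<longleftrightarrow> (\<forall>v\<in>set ys. v < z)"
    using dist by (intro eq_Max_Cons_iff) auto
  then have last_max: "vs ! (length vs - 1) = Max (set (tl vs)) \<longleftrightarrow> (\<forall>v\<in>set ys. v < z)"
    by (simp add: vs_def nth_append)
  have "length vs \<ge> 4" using len by (simp add: vs_def)
  then show ?thesis
    unfolding vs_def[symmetric] forbidden_def Let_def second penultimate first_max last_max by auto
qed

lemma no_forbidden_path_iff: "\<not> (\<exists>vs. is_path E vs \<and> forbidden vs) \<longleftrightarrow> forbidden_free E"
proof -
  have "(\<exists>vs. is_path E vs \<and> forbidden vs) \<longleftrightarrow> (\<exists>x ys z. forbidden_walk E x ys z)"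
  proof
    assume "\<exists>vs. is_path E vs \<and> forbidden vs"
    then obtain vs where path: "is_path E vs" and forb: "forbidden vs" by blast
    then have "length vs \<ge> 4" by (simp add: forbidden_def Let_def)
    then obtain x rest where vs: "vs = x # rest" "length rest \<ge> 3" by (cases vs) auto
    moreover have "rest \<noteq> []" using vs by auto
    ultimately have "vs = x # butlast rest @ [last rest]" "length (butlast rest) \<ge> 2" by auto
    then obtain ys z where "vs = x # ys @ [z]" "length ys \<ge> 2" by blast
    then have "forbidden_walk E x ys z"
      using path forb forbidden_Cons_snoc[of x ys z] by (auto simp: forbidden_walk_def is_path_iff_walk)
    then show "\<exists>x ys z. forbidden_walk E x ys z" by blast
  next
    assume "\<exists>x ys z. forbidden_walk E x ys z"
    then obtain x ys z where "forbidden_walk E x ys z" by blast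
    then have "is_path E (x # ys @ [z]) \<and> forbidden (x # ys @ [z])"
      using forbidden_Cons_snoc[of x ys z] by (auto simp: forbidden_walk_def is_path_iff_walk)
    then show "\<exists>vs. is_path E vs \<and> forbidden vs" by blast
  qed
  then show ?thesis by (simp add: forbidden_free_def)
qed

lemma is_face_iff: "is_face V F \<longleftrightarrow> F \<subseteq> KEdges V \<and> forbidden_free F"
  unfolding is_face_def no_forbidden_path_iff ..

lemma forbidden_walk_mono: "forbidden_walk E x ys z \<Longrightarrow> E \<subseteq> E' \<Longrightarrow> forbidden_walk E' x ys z"
  by (auto simp: forbidden_walk_def intro: walk_mono)

lemma forbidden_free_mono: "forbidden_free E' \<Longrightarrow> E \<subseteq> E' \<Longrightarrow> forbidden_free E"
  by (meson forbidden_walk_mono forbidden_free_def)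

lemma forbidden_walk_vertices:
  "forbidden_walk E x ys z \<Longrightarrow> E \<subseteq> KEdges V \<Longrightarrow> set (x # ys @ [z]) \<subseteq> V"
  by (rule walk_vertices) (auto simp: forbidden_walk_def)

lemma forbidden_walk_first_max:
  "forbidden_walk E x ys z \<Longrightarrow> v \<in> set (x # ys @ [z]) \<Longrightarrow> v \<noteq> x \<Longrightarrow> v < x"
  by (auto simp: forbidden_walk_def)

lemma forbidden_walk_uses_new_edge:
  assumes "forbidden_walk (insert e E) x ys z" "\<not> forbidden_walk E x ys z"
  shows "e \<subseteq> set (x # ys @ [z])"
proof -
  define vs where "vs = x # ys @ [z]"
  have walk: "walk (insert e E) vs" and "\<not> walk E vs"
    using assms by (auto simp: forbidden_walk_def vs_def)
  then obtain i where i: "Suc i < length vs" "{vs ! i, vs ! Suc i} \<notin> E" by (auto simp: walk_iff_nth)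
  then have "e = {vs ! i, vs ! Suc i}" using walk_nthD[OF walk i(1)] by blast
  then show ?thesis using i(1) by (auto simp: vs_def[symmetric])
qed

lemma forbidden_walk_min_vertex:
  assumes fw: "forbidden_walk E x ys z" and a: "a \<in> set (x # ys @ [z])"
    and min: "\<forall>v\<in>set (x # ys @ [z]). a \<le> v"
  obtains p q where "{p, a} \<in> E" "{a, q} \<in> E" "p \<noteq> q" "p \<noteq> x" "q \<noteq> x"
    "p \<in> set (x # ys @ [z])" "q \<in> set (x # ys @ [z])"
proof -
  define vs where "vs = x # ys @ [z]"
  have dist: "distinct vs" and walk: "walk E vs" and len: "length ys \<ge> 2"
    and order: "last ys < hd ys" "\<forall>v\<in>set ys. v < z" "z < x"
    using fw by (auto simp: forbidden_walk_def vs_def)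
  obtain j where j: "j < length vs" "vs ! j = a" using a by (metis in_set_conv_nth vs_def)
  have ys: "ys \<noteq> []" using len by auto
  have first: "vs ! 0 = x" and second: "vs ! 1 = hd ys" and final: "vs ! (length vs - 1) = z"
    using ys by (auto simp: vs_def nth_append hd_conv_nth)
  have "a \<le> last ys" "hd ys < z" using ys min order by (auto simp: vs_def)
  then have "a \<noteq> x" "a \<noteq> hd ys" "a \<noteq> z" using order by auto
  then have "j \<noteq> 0" "j \<noteq> 1" "j \<noteq> length vs - 1" using j(2) first second final by (metis One_nat_def)+
  then have j_range: "0 < j - 1" "j - 1 < length vs" "Suc j < length vs" using j(1) by arith+
  have "{vs ! (j - 1), a} \<in> E" "{a, vs ! Suc j} \<in> E"
    using walk_nthD[OF walk, of "j - 1"] walk_nthD[OF walk, of j] j j_range by auto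
  moreover have "vs ! (j - 1) \<noteq> vs ! Suc j" "vs ! (j - 1) \<noteq> x" "vs ! Suc j \<noteq> x"
    using nth_eq_iff_index_eq[OF dist, of "j - 1" "Suc j"] nth_eq_iff_index_eq[OF dist, of "j - 1" 0]
      nth_eq_iff_index_eq[OF dist, of "Suc j" 0] j_range first by (auto simp: vs_def)
  moreover have "vs ! (j - 1) \<in> set vs" "vs ! Suc j \<in> set vs" using j_range by auto
  ultimately show ?thesis using that unfolding vs_def by blast
qed

lemma forbidden_free_card_le_3:
  assumes "finite V" "card V \<le> 3" "E \<subseteq> KEdges V"
  shows "forbidden_free E"
  unfolding forbidden_free_def
proof
  assume "\<exists>x ys z. forbidden_walk E x ys z"
  then obtain x ys z where fw: "forbidden_walk E x ys z" by blast
  then have "length (x # ys @ [z]) = card (set (x # ys @ [z]))"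
    by (simp add: forbidden_walk_def distinct_card)
  also have "\<dots> \<le> card V"
    using forbidden_walk_vertices[OF fw assms(3)] assms(1) by (intro card_mono)
  finally show False using fw assms(2) by (simp add: forbidden_walk_def)
qed

lemma walk_stays_on_side:
  assumes "E1 \<subseteq> KEdges V1" "E2 \<subseteq> KEdges V2" "V1 \<inter> V2 = {c}"
    and "walk (E1 \<union> E2) vs" "c \<notin> set vs" "vs \<noteq> []" "hd vs \<in> V1"
  shows "set vs \<subseteq> V1"
  using assms(4-7)
proof (induction "E1 \<union> E2" vs rule: walk.induct)
  case (3 x y vs)
  then have x: "x \<in> V1" "x \<noteq> c" and xy: "{x, y} \<in> E1 \<union> E2" by auto
  have "y \<in> V1"
  proof (cases "{x, y} \<in> E1")
    case True
    then show ?thesis using assms(1) KEdges_iff by blast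
  next
    case False
    then have "x \<in> V2" using xy assms(2) KEdges_iff by blast
    then show ?thesis using x assms(3) by blast
  qed
  then show ?case using 3 x by auto
qed auto

lemma walk_on_side:
  assumes "E1 \<subseteq> KEdges V1" "V1 \<inter> V2 = {c}"
    and "walk (E1 \<union> E2) vs" "distinct vs" "set vs \<subseteq> V2"
  shows "walk E2 vs"
  using assms(3-5)
proof (induction "E1 \<union> E2" vs rule: walk.induct)
  case (3 x y vs)
  have "{x, y} \<notin> E1"
  proof
    assume "{x, y} \<in> E1"
    then have "x \<in> V1" "y \<in> V1" using assms(1) KEdges_iff by blast+
    then have "x = c" "y = c" using 3 assms(2) by auto
    then show False using 3 by auto
  qed
  then show ?case using 3 by auto
qed auto

lemma walk_avoiding_cut_on_one_side:
  assumes "E1 \<subseteq> KEdges V1" "E2 \<subseteq> KEdges V2" "V1 \<inter> V2 = {c}"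
    and "walk (E1 \<union> E2) vs" "c \<notin> set vs" "vs \<noteq> []" "hd vs \<in> V1 \<union> V2"
  shows "set vs \<subseteq> V1 \<or> set vs \<subseteq> V2"
proof (cases "hd vs \<in> V1")
  case True
  then show ?thesis using walk_stays_on_side[OF assms(1-6)] by blast
next
  case False
  then have "hd vs \<in> V2" using assms(7) by blast
  moreover have "V2 \<inter> V1 = {c}" "walk (E2 \<union> E1) vs" using assms(3,4) by (auto simp: Un_commute)
  ultimately show ?thesis using walk_stays_on_side[OF assms(2,1)] assms(5,6) by blast
qed

text \<open>Both ends of a forbidden walk exceed its interior, so when \<open>c\<close> dominates \<open>V1\<close> a walk
  through the cut vertex \<open>c\<close> has both ends in \<open>V2\<close> and cannot enter \<open>V1\<close>.\<close>

lemma forbidden_walk_on_one_side: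
  assumes E1: "E1 \<subseteq> KEdges V1" and E2: "E2 \<subseteq> KEdges V2" and cut: "V1 \<inter> V2 = {c}"
    and le: "\<forall>v\<in>V1. v \<le> c" and fw: "forbidden_walk (E1 \<union> E2) x ys z"
  shows "set (x # ys @ [z]) \<subseteq> V1 \<or> set (x # ys @ [z]) \<subseteq> V2"
proof -
  define vs where "vs = x # ys @ [z]"
  have dist: "distinct vs" and walk: "walk (E1 \<union> E2) vs" and ys: "ys \<noteq> []"
    using fw by (auto simp: forbidden_walk_def vs_def)
  have "E1 \<union> E2 \<subseteq> KEdges (V1 \<union> V2)"
    using E1 E2 KEdges_mono[of V1 "V1 \<union> V2"] KEdges_mono[of V2 "V1 \<union> V2"] by blast
  then have in_union: "set vs \<subseteq> V1 \<union> V2" unfolding vs_def by (rule forbidden_walk_vertices[OF fw])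
  have piece: "set p \<subseteq> V1 \<or> set p \<subseteq> V2"
    if "walk (E1 \<union> E2) p" "c \<notin> set p" "p \<noteq> []" "set p \<subseteq> set vs" for p
    using walk_avoiding_cut_on_one_side[OF E1 E2 cut that(1-3)] that(3,4) in_union
    by (meson hd_in_set subsetD)
  have "set vs \<subseteq> V1 \<or> set vs \<subseteq> V2"
  proof (cases "c \<in> set vs")
    case False
    then show ?thesis using piece[OF walk] by (simp add: vs_def)
  next
    case True
    then obtain pre post where split: "vs = pre @ c # post" by (meson split_list)
    have c_notin: "c \<notin> set pre" "c \<notin> set post" using dist split by auto
    have walks: "walk (E1 \<union> E2) pre" "walk (E1 \<union> E2) post"
      using walk split by (auto simp: walk_append walk_Cons)
    have c_in: "c \<in> V1" "c \<in> V2" using cut by auto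
    consider "pre = []" | "post = []" | "pre \<noteq> []" "post \<noteq> []" by blast
    then show ?thesis
    proof cases
      case 1
      then show ?thesis using piece[OF walks(2) c_notin(2)] split c_in by (cases "post = []") auto
    next
      case 2
      then show ?thesis using piece[OF walks(1) c_notin(1)] split c_in by (cases "pre = []") auto
    next
      case 3
      then have "hd vs = hd pre" "last vs = last post" using split by auto
      then have "hd pre = x" "last post = z" by (simp_all add: vs_def)
      then have "x \<in> set pre" "z \<in> set post" using 3 by (metis hd_in_set, metis last_in_set)
      then have "c \<in> set ys" using c_notin True by (auto simp: vs_def)
      then have "c < x" "c < z" using fw by (auto simp: forbidden_walk_def)
      then have "x \<notin> V1" "z \<notin> V1" using le by auto
      then have "set pre \<subseteq> V2" "set post \<subseteq> V2"
        using piece[OF walks(1) c_notin(1)] piece[OF walks(2) c_notin(2)] 3 split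
          \<open>x \<in> set pre\<close> \<open>z \<in> set post\<close> by auto
      then show ?thesis using split c_in by auto
    qed
  qed
  then show ?thesis by (simp add: vs_def)
qed

lemma forbidden_walk_Un_cut:
  assumes E1: "E1 \<subseteq> KEdges V1" and E2: "E2 \<subseteq> KEdges V2" and cut: "V1 \<inter> V2 = {c}"
    and le: "\<forall>v\<in>V1. v \<le> c" and fw: "forbidden_walk (E1 \<union> E2) x ys z"
  shows "forbidden_walk E1 x ys z \<or> forbidden_walk E2 x ys z"
proof -
  have dist: "distinct (x # ys @ [z])" and walk: "walk (E1 \<union> E2) (x # ys @ [z])"
    using fw by (auto simp: forbidden_walk_def)
  have "V2 \<inter> V1 = {c}" "walk (E2 \<union> E1) (x # ys @ [z])" using cut walk by (auto simp: Un_commute)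
  then have "set (x # ys @ [z]) \<subseteq> V1 \<Longrightarrow> walk E1 (x # ys @ [z])"
    using walk_on_side[OF E2 _ _ dist] by blast
  moreover have "set (x # ys @ [z]) \<subseteq> V2 \<Longrightarrow> walk E2 (x # ys @ [z])"
    using walk_on_side[OF E1 cut walk dist] by blast
  ultimately show ?thesis
    using forbidden_walk_on_one_side[OF assms] fw by (auto simp: forbidden_walk_def)
qed

lemma forbidden_free_Un_cut:
  assumes "E1 \<subseteq> KEdges V1" "E2 \<subseteq> KEdges V2" "V1 \<inter> V2 = {c}" "\<forall>v\<in>V1. v \<le> c"
    and "forbidden_free E1" "forbidden_free E2"
  shows "forbidden_free (E1 \<union> E2)"
  using forbidden_walk_Un_cut[OF assms(1-4)] assms(5,6) by (auto simp: forbidden_free_def)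

lemma forbidden_walk_insert_max_edge:
  assumes fw: "forbidden_walk (insert {v, b} E) x ys z" and not_fw: "\<not> forbidden_walk E x ys z"
    and le: "\<forall>u \<in> set (x # ys @ [z]). u \<le> b" and vb: "v \<noteq> b"
  shows "x = b" "hd ys = v"
    "\<And>i. 0 < i \<Longrightarrow> Suc i < length (x # ys @ [z]) \<Longrightarrow> {(x # ys @ [z]) ! i, (x # ys @ [z]) ! Suc i} \<in> E"
proof -
  define vs where "vs = x # ys @ [z]"
  have dist: "distinct vs" and walk: "walk (insert {v, b} E) vs" and ys: "ys \<noteq> []"
    and x_max: "\<forall>u \<in> set vs. u \<noteq> x \<longrightarrow> u < x"
    using fw by (auto simp: forbidden_walk_def vs_def)
  have "\<not> walk E vs" using not_fw fw by (auto simp: forbidden_walk_def vs_def)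
  then obtain i where i: "Suc i < length vs" "{vs ! i, vs ! Suc i} \<notin> E" by (auto simp: walk_iff_nth)
  then have edge: "{vs ! i, vs ! Suc i} = {v, b}" using walk_nthD[OF walk i(1)] by blast
  then have "b \<in> set vs" using i(1) by (metis Suc_lessD insertI1 insert_commute nth_mem doubleton_eq_iff)
  then show xb: "x = b" using x_max le by (force simp: vs_def)
  have not_b: "vs ! j \<noteq> b" if "0 < j" "j < length vs" for j
    using nth_eq_iff_index_eq[OF dist that(2), of 0] xb that by (auto simp: vs_def)
  have "i = 0" using edge not_b i(1) vb by (metis Suc_lessD doubleton_eq_iff gr0I zero_less_Suc)
  then have "vs ! 1 = v" using edge not_b[of 1] i(1) by (auto simp: doubleton_eq_iff)
  then show "hd ys = v" using ys by (cases ys) (auto simp: vs_def)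
  fix j assume j: "0 < j" "Suc j < length (x # ys @ [z])"
  then have "{vs ! j, vs ! Suc j} \<in> insert {v, b} E" "vs ! j \<noteq> b" "vs ! Suc j \<noteq> b"
    using walk_nthD[OF walk, of j] not_b[of j] not_b[of "Suc j"] by (auto simp: vs_def)
  then show "{(x # ys @ [z]) ! j, (x # ys @ [z]) ! Suc j} \<in> E"
    unfolding vs_def[symmetric] by (auto simp: doubleton_eq_iff)
qed

lemma forbidden_walk_insert_min_max_edge:
  assumes fw: "forbidden_walk (insert {a, b} E) x ys z"
    and range: "\<forall>v \<in> set (x # ys @ [z]). a \<le> v \<and> v \<le> b"
  shows "forbidden_walk E x ys z"
proof (rule ccontr)
  assume not_fw: "\<not> forbidden_walk E x ys z"
  have ys: "ys \<noteq> []" "last ys < hd ys" using fw by (auto simp: forbidden_walk_def)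
  then have "a \<le> last ys" "hd ys \<le> b" using range by auto
  then have "a \<noteq> b" using ys by simp
  then have "hd ys = a" using forbidden_walk_insert_max_edge(2)[OF fw not_fw] range by auto
  then show False using \<open>a \<le> last ys\<close> ys by simp
qed

lemma is_facet_iff_maximal:
  "is_facet W F \<longleftrightarrow> is_face W F \<and> (\<forall>e\<in>KEdges W. e \<notin> F \<longrightarrow> \<not> forbidden_free (insert e F))"
proof
  assume facet: "is_facet W F"
  have "\<not> forbidden_free (insert e F)" if e: "e \<in> KEdges W" "e \<notin> F" for e
  proof
    assume "forbidden_free (insert e F)"
    then have "is_face W (insert e F)" using facet e by (simp add: is_facet_def is_face_iff)
    then show False using facet e by (auto simp: is_facet_def)
  qed
  then show "is_face W F \<and> (\<forall>e\<in>KEdges W. e \<notin> F \<longrightarrow> \<not> forbidden_free (insert e F))"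
    using facet by (simp add: is_facet_def)
next
  assume maximal: "is_face W F \<and> (\<forall>e\<in>KEdges W. e \<notin> F \<longrightarrow> \<not> forbidden_free (insert e F))"
  have "G = F" if G: "is_face W G" "F \<subseteq> G" for G
  proof (rule ccontr)
    assume "G \<noteq> F"
    then obtain e where e: "e \<in> G" "e \<notin> F" using G(2) by blast
    then have "e \<in> KEdges W" "forbidden_free G" using G(1) by (auto simp: is_face_iff)
    then have "forbidden_free (insert e F)" using forbidden_free_mono e G(2) by blast
    then show False using maximal e \<open>e \<in> KEdges W\<close> by blast
  qed
  then show "is_facet W F" using maximal by (simp add: is_facet_def)
qed

lemma facet_is_face: "is_facet W F \<Longrightarrow> is_face W F"
  by (simp add: is_facet_def)

lemma facet_subset_KEdges: "is_facet W F \<Longrightarrow> F \<subseteq> KEdges W"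
  by (simp add: is_facet_def is_face_iff)

lemma facet_forbidden_free: "is_facet W F \<Longrightarrow> forbidden_free F"
  by (simp add: is_facet_def is_face_iff)

lemma face_extends_to_facet:
  assumes fin: "finite V" and face: "is_face V H"
  obtains G where "is_facet V G" "H \<subseteq> G"
proof -
  let ?P = "\<lambda>G. is_face V G \<and> H \<subseteq> G"
  have bounded: "\<forall>G. ?P G \<longrightarrow> card G < Suc (card (KEdges V))"
    using card_mono[OF finite_KEdges[OF fin]] by (auto simp: is_face_iff less_Suc_eq_le)
  obtain G where G: "?P G" and largest: "\<forall>G'. ?P G' \<longrightarrow> card G' \<le> card G"
    using ex_has_greatest_nat[of ?P H, OF _ bounded] face by blast
  have "G' = G" if G': "is_face V G'" "G \<subseteq> G'" for G'
  proof -
    have "finite G'" using G'(1) finite_KEdges[OF fin] by (auto simp: is_face_iff intro: finite_subset)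
    moreover have "card G' \<le> card G" using largest G G' by blast
    ultimately show ?thesis using card_seteq G'(2) by blast
  qed
  then have "is_facet V G" using G by (auto simp: is_facet_def)
  then show ?thesis using that G by blast
qed

lemma Min_less_Max_card_ge_2:
  assumes "finite W" "card W \<ge> 2"
  shows "Min W < Max W"
proof -
  have "\<not> card W \<le> Suc 0" using assms(2) by simp
  then obtain x y where xy: "x \<in> W" "y \<in> W" "x \<noteq> y"
    using card_le_Suc0_iff_eq[OF assms(1)] by blast
  then have "Min W \<le> x" "Min W \<le> y" "x \<le> Max W" "y \<le> Max W" using assms(1) by auto
  then show ?thesis using xy(3) by (simp add: not_le[symmetric])
qed

lemma Min_Max_edge_in_facet:
  assumes "finite W" and "card W \<ge> 2" and facet: "is_facet W F"
  shows "{Min W, Max W} \<in> F"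
proof (rule ccontr)
  assume not_in: "{Min W, Max W} \<notin> F"
  have "W \<noteq> {}" using assms(2) by auto
  then have edge: "{Min W, Max W} \<in> KEdges W"
    using assms(1) Min_less_Max_card_ge_2[OF assms(1,2)] by (simp add: KEdges_iff)
  have "forbidden_free (insert {Min W, Max W} F)"
    unfolding forbidden_free_def
  proof
    assume "\<exists>x ys z. forbidden_walk (insert {Min W, Max W} F) x ys z"
    then obtain x ys z where fw: "forbidden_walk (insert {Min W, Max W} F) x ys z" by blast
    have "set (x # ys @ [z]) \<subseteq> W"
      using forbidden_walk_vertices[OF fw] edge facet_subset_KEdges[OF facet] by blast
    then have "\<forall>v \<in> set (x # ys @ [z]). Min W \<le> v \<and> v \<le> Max W" using assms(1) by auto
    then have "forbidden_walk F x ys z" by (rule forbidden_walk_insert_min_max_edge[OF fw])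
    then show False using facet_forbidden_free[OF facet] by (auto simp: forbidden_free_def)
  qed
  then show False using facet edge not_in by (auto simp: is_facet_iff_maximal)
qed

lemma verts_facet:
  assumes fin: "finite W" and card: "card W \<ge> 2" and facet: "is_facet W F"
  shows "verts F = W"
proof
  show "verts F \<subseteq> W" using facet_subset_KEdges[OF facet] by (auto simp: verts_def dest: KEdges_subset)
next
  show "W \<subseteq> verts F"
  proof
    fix v assume v: "v \<in> W"
    have top: "{Min W, Max W} \<in> F" by (rule Min_Max_edge_in_facet[OF fin card facet])
    show "v \<in> verts F"
    proof (rule ccontr)
      assume v_notin: "v \<notin> verts F"
      then have vb: "v \<noteq> Max W" using top by (auto simp: verts_def)
      have "Max W \<in> W" using fin v by (auto intro: Max_in)
      then have edge: "{v, Max W} \<in> KEdges W" using v vb by (simp add: KEdges_iff)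
      text \<open>The new edge would be the first edge of a forbidden walk whose second edge leaves \<open>v\<close>.\<close>
      have "forbidden_free (insert {v, Max W} F)"
        unfolding forbidden_free_def
      proof
        assume "\<exists>x ys z. forbidden_walk (insert {v, Max W} F) x ys z"
        then obtain x ys z where fw: "forbidden_walk (insert {v, Max W} F) x ys z" by blast
        have not_fw: "\<not> forbidden_walk F x ys z"
          using facet_forbidden_free[OF facet] by (auto simp: forbidden_free_def)
        have "set (x # ys @ [z]) \<subseteq> W"
          using forbidden_walk_vertices[OF fw] edge facet_subset_KEdges[OF facet] by blast
        then have le: "\<forall>u \<in> set (x # ys @ [z]). u \<le> Max W" using fin by auto
        have "length ys \<ge> 2" using fw by (simp add: forbidden_walk_def)
        then have len: "Suc 1 < length (x # ys @ [z])" by (cases ys) auto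
        have "(x # ys @ [z]) ! 1 = v"
          using forbidden_walk_insert_max_edge(2)[OF fw not_fw le vb] fw
          by (cases ys) (auto simp: forbidden_walk_def)
        then have "{v, (x # ys @ [z]) ! 2} \<in> F"
          using forbidden_walk_insert_max_edge(3)[OF fw not_fw le vb, of 1] len by (simp add: numeral_2_eq_2)
        then show False using v_notin by (auto simp: verts_def)
      qed
      then show False using facet edge v_notin by (auto simp: is_facet_iff_maximal verts_def)
    qed
  qed
qed

section \<open>Gluing facets at a cut vertex\<close>

abbreviation glue :: "nat set \<Rightarrow> nat set set \<Rightarrow> nat set set \<Rightarrow> nat set set" where
  "glue W F1 F2 \<equiv> F1 \<union> F2 \<union> {{Min W, Max W}}"

text \<open>The vertex sets \<open>V(F\<^sup>1)\<close> and \<open>V(F\<^sup>2)\<close> of the decomposition of a facet of \<open>\<Delta>\<^sub>W\<close>.\<close>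

locale vertex_split =
  fixes W V1 V2 :: "nat set"
  assumes finite_W: "finite W" and Un_eq: "V1 \<union> V2 = W" and Int_eq: "V1 \<inter> V2 = {Max V1}"
    and Min_in_V1: "Min W \<in> V1" and Max_in_V2: "Max W \<in> V2" and Max_notin_V1: "Max W \<notin> V1"
    and card_V1: "card V1 \<ge> 2"
begin

lemma finite_V1: "finite V1" and finite_V2: "finite V2" and V1_subset: "V1 \<subseteq> W" and V2_subset: "V2 \<subseteq> W"
  using finite_W Un_eq by auto

lemma cut_in_V1: "Max V1 \<in> V1" and cut_in_V2: "Max V1 \<in> V2"
  using Int_eq by auto

lemma le_cut: "\<forall>v\<in>V1. v \<le> Max V1"
  using finite_V1 by auto

lemma W_nonempty: "W \<noteq> {}"
  using Min_in_V1 V1_subset by auto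

lemma Min_le_W: "v \<in> W \<Longrightarrow> Min W \<le> v" and le_Max_W: "v \<in> W \<Longrightarrow> v \<le> Max W"
  using finite_W by auto

lemma Min_in_W: "Min W \<in> W" and Max_in_W: "Max W \<in> W"
  using finite_W W_nonempty by auto

lemma Min_V1: "Min V1 = Min W"
  using Min_in_V1 V1_subset finite_V1 finite_W by (intro Min_eqI) auto

lemma Max_V2: "Max V2 = Max W"
  using Max_in_V2 V2_subset finite_V2 le_Max_W by (intro Max_eqI) auto

lemma Min_less_cut: "Min W < Max V1"
  using Min_less_Max_card_ge_2[OF finite_V1 card_V1] Min_V1 by simp

lemma cut_less_Max: "Max V1 < Max W"
proof -
  have "Max V1 \<le> Max W" using le_Max_W cut_in_V1 V1_subset by blast
  moreover have "Max V1 \<noteq> Max W" using cut_in_V1 Max_notin_V1 by metis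
  ultimately show ?thesis by simp
qed

lemma Min_less_Max: "Min W < Max W"
  using Min_less_cut cut_less_Max by simp

lemma Min_notin_V2: "Min W \<notin> V2"
proof
  assume "Min W \<in> V2"
  then have "Min W = Max V1" using Int_eq Min_in_V1 by blast
  then show False using Min_less_cut by simp
qed

lemma V2_eq: "V2 = W - V1 \<union> {Max V1}"
  using Un_eq Int_eq by blast

lemma card_V2: "card V2 \<ge> 2"
proof -
  have "card {Max V1, Max W} \<le> card V2"
    using cut_in_V2 Max_in_V2 finite_V2 by (intro card_mono) auto
  then show ?thesis using cut_less_Max by simp
qed

lemma card_V1_less: "card V1 < card W" and card_V2_less: "card V2 < card W"
proof -
  have "V1 \<subset> W" "V2 \<subset> W"
    using V1_subset V2_subset Max_in_W Max_notin_V1 Min_in_W Min_notin_V2 by blast+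
  then show "card V1 < card W" "card V2 < card W" using finite_W by (simp_all add: psubset_card_mono)
qed

lemma card_W: "card W \<ge> 3"
  using card_V1 card_V1_less by simp

lemma KEdges_V1_not_V2: "e \<in> KEdges V1 \<Longrightarrow> \<not> e \<subseteq> V2 \<and> e \<noteq> {Min W, Max W}"
  using KEdges_not_singleton[of e V1 "Max V1"] Int_eq Max_notin_V1 by (auto dest: KEdges_subset)

lemma KEdges_V2_not_V1: "e \<in> KEdges V2 \<Longrightarrow> \<not> e \<subseteq> V1 \<and> e \<noteq> {Min W, Max W}"
  using KEdges_not_singleton[of e V2 "Max V1"] Int_eq Min_notin_V2 by (auto dest: KEdges_subset)

lemma glue_forbidden_walk:
  assumes "E1 \<subseteq> KEdges V1" "E2 \<subseteq> KEdges V2" "forbidden_walk (insert {Min W, Max W} (E1 \<union> E2)) x ys z"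
  shows "forbidden_walk E1 x ys z \<or> forbidden_walk E2 x ys z"
proof -
  have "insert {Min W, Max W} (E1 \<union> E2) \<subseteq> KEdges W"
    using assms(1,2) KEdges_mono[OF V1_subset] KEdges_mono[OF V2_subset] Min_in_W Max_in_W Min_less_Max
    by (auto simp: KEdges_iff)
  then have "set (x # ys @ [z]) \<subseteq> W" using forbidden_walk_vertices[OF assms(3)] by blast
  then have "forbidden_walk (E1 \<union> E2) x ys z"
    using forbidden_walk_insert_min_max_edge[OF assms(3)] Min_le_W le_Max_W by blast
  then show ?thesis using forbidden_walk_Un_cut[OF assms(1,2) Int_eq le_cut] by blast
qed

lemma glue_is_face:
  assumes "is_face V1 F1" "is_face V2 F2"
  shows "is_face W (glue W F1 F2)"
proof -
  have K: "F1 \<subseteq> KEdges V1" "F2 \<subseteq> KEdges V2" and free: "forbidden_free F1" "forbidden_free F2"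
    using assms by (auto simp: is_face_iff)
  have "glue W F1 F2 \<subseteq> KEdges W"
    using K KEdges_mono[OF V1_subset] KEdges_mono[OF V2_subset] Min_in_W Max_in_W Min_less_Max
    by (auto simp: KEdges_iff)
  moreover have "forbidden_free (glue W F1 F2)"
    using glue_forbidden_walk[OF K] free by (auto simp: forbidden_free_def)
  ultimately show ?thesis by (simp add: is_face_iff)
qed

end

definition adjacent_in :: "nat set set \<Rightarrow> nat set \<Rightarrow> nat \<Rightarrow> nat \<Rightarrow> bool" where
  "adjacent_in E S u v \<longleftrightarrow> {u, v} \<in> E \<and> u \<in> S \<and> v \<in> S"

abbreviation reach :: "nat set set \<Rightarrow> nat set \<Rightarrow> nat \<Rightarrow> nat \<Rightarrow> bool" where
  "reach E S \<equiv> (adjacent_in E S)\<^sup>*\<^sup>*"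

lemma reach_step: "reach E S u v \<Longrightarrow> {v, w} \<in> E \<Longrightarrow> v \<in> S \<Longrightarrow> w \<in> S \<Longrightarrow> reach E S u w"
  by (rule rtranclp.rtrancl_into_rtrancl) (auto simp: adjacent_in_def)

lemma reach_edge: "{v, w} \<in> E \<Longrightarrow> v \<in> S \<Longrightarrow> w \<in> S \<Longrightarrow> reach E S v w"
  using reach_step[of E S v v w] by simp

lemma reach_sym: "reach E S u v \<Longrightarrow> reach E S v u"
proof (induction rule: rtranclp_induct)
  case (step y z)
  then have "adjacent_in E S z y" by (auto simp: adjacent_in_def insert_commute)
  then show ?case using step(3) by (rule converse_rtranclp_into_rtranclp)
qed simp

lemma reach_mono: "reach E S u v \<Longrightarrow> E \<subseteq> E' \<Longrightarrow> S \<subseteq> S' \<Longrightarrow> reach E' S' u v"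
proof (induction rule: rtranclp_induct)
  case (step y z)
  then show ?case by (metis adjacent_in_def reach_step subsetD)
qed simp

lemma reach_in_set: "reach E S u v \<Longrightarrow> u \<in> S \<Longrightarrow> v \<in> S"
  by (induction rule: rtranclp_induct) (auto simp: adjacent_in_def)

lemma reach_closed:
  assumes "reach E S u v" "u \<in> A" "\<And>x y. x \<in> A \<Longrightarrow> adjacent_in E S x y \<Longrightarrow> y \<in> A"
  shows "v \<in> A"
  using assms by (induction rule: rtranclp_induct) auto

lemma reach_imp_walk:
  assumes "reach E S u v" "u \<in> S"
  obtains vs where "vs \<noteq> []" "hd vs = u" "last vs = v" "distinct vs" "walk E vs" "set vs \<subseteq> S"
proof -
  from assms have "\<exists>vs. vs \<noteq> [] \<and> hd vs = u \<and> last vs = v \<and> distinct vs \<and> walk E vs \<and> set vs \<subseteq> S"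
  proof (induction rule: rtranclp_induct)
    case base
    then show ?case by (intro exI[of _ "[u]"]) auto
  next
    case (step y z)
    then obtain vs where vs: "vs \<noteq> []" "hd vs = u" "last vs = y" "distinct vs" "walk E vs" "set vs \<subseteq> S"
      by blast
    have yz: "{y, z} \<in> E" "z \<in> S" using step(2) by (auto simp: adjacent_in_def)
    show ?case
    proof (cases "z \<in> set vs")
      case True
      then obtain pre post where split: "vs = pre @ z # post" by (meson split_list)
      have "walk E (pre @ [z])" using vs(5) split by (simp add: walk_append walk_Cons)
      moreover have "hd (pre @ [z]) = u" using vs(2) split by (cases pre) auto
      moreover have "distinct (pre @ [z])" "set (pre @ [z]) \<subseteq> S" using vs(4,6) split by auto
      ultimately show ?thesis by (intro exI[of _ "pre @ [z]"]) auto
    next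
      case False
      have "walk E (vs @ [z])" using vs yz by (simp add: walk_append)
      then show ?thesis using vs yz False by (intro exI[of _ "vs @ [z]"]) auto
    qed
  qed
  then show ?thesis using that by blast
qed

lemma walk_imp_reach: "walk E vs \<Longrightarrow> set vs \<subseteq> S \<Longrightarrow> vs \<noteq> [] \<Longrightarrow> reach E S (hd vs) (last vs)"
proof (induction E vs rule: walk.induct)
  case (3 E x y vs)
  then have "reach E S y (last (y # vs))" by simp
  moreover have "adjacent_in E S x y" using 3 by (simp add: adjacent_in_def)
  ultimately show ?case by (auto intro: converse_rtranclp_into_rtranclp)
qed auto

lemma walk_reach_member:
  assumes "walk E vs" "set vs \<subseteq> S" "v \<in> set vs"
  shows "reach E S (hd vs) v"
proof -
  obtain pre post where split: "vs = pre @ v # post" using assms(3) by (meson split_list)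
  then have "walk E (pre @ [v])" "set (pre @ [v]) \<subseteq> S"
    using assms(1,2) by (auto simp: walk_append walk_Cons)
  then have "reach E S (hd (pre @ [v])) (last (pre @ [v]))" by (intro walk_imp_reach) auto
  then show ?thesis using split by (cases pre) auto
qed

section \<open>Decomposition of facets\<close>

lemma facet_Min_has_neighbour:
  assumes fin: "finite W" and card: "card W \<ge> 3" and facet: "is_facet W F"
  obtains x where "{Min W, x} \<in> F" "x \<noteq> Max W"
proof -
  define a b where "a = Min W" and "b = Max W"
  have "\<exists>x. {a, x} \<in> F \<and> x \<noteq> b"
  proof (rule ccontr)
    assume none: "\<not> (\<exists>x. {a, x} \<in> F \<and> x \<noteq> b)"
    have "\<not> W \<subseteq> {a, b}"
    proof
      assume "W \<subseteq> {a, b}"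
      then have "card W \<le> card {a, b}" by (intro card_mono) auto
      also have "\<dots> \<le> 2" by (cases "a = b") auto
      finally show False using card by simp
    qed
    then obtain m where m: "m \<in> W" "m \<noteq> a" "m \<noteq> b" by blast
    have "W \<noteq> {}" using m(1) by auto
    then have "a \<in> W" using fin by (simp add: a_def)
    then have edge: "{a, m} \<in> KEdges W" using m by (simp add: KEdges_iff)
    have "forbidden_free (insert {a, m} F)"
      unfolding forbidden_free_def
    proof
      assume "\<exists>x ys z. forbidden_walk (insert {a, m} F) x ys z"
      then obtain x ys z where fw: "forbidden_walk (insert {a, m} F) x ys z" by blast
      have not_fw: "\<not> forbidden_walk F x ys z"
        using facet_forbidden_free[OF facet] by (auto simp: forbidden_free_def)
      have in_W: "set (x # ys @ [z]) \<subseteq> W"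
        using forbidden_walk_vertices[OF fw] edge facet_subset_KEdges[OF facet] by blast
      have "a \<in> set (x # ys @ [z])" using forbidden_walk_uses_new_edge[OF fw not_fw] by auto
      moreover have "\<forall>v\<in>set (x # ys @ [z]). a \<le> v" using in_W fin by (auto simp: a_def)
      ultimately obtain p q where pq: "{p, a} \<in> insert {a, m} F" "{a, q} \<in> insert {a, m} F" "p \<noteq> q"
        "p \<noteq> x" "q \<noteq> x" "p \<in> set (x # ys @ [z])" "q \<in> set (x # ys @ [z])"
        by (rule forbidden_walk_min_vertex[OF fw])
      text \<open>Only the first vertex of the walk can be \<open>b\<close>, so both neighbours of \<open>a\<close> are \<open>m\<close>.\<close>
      have "x \<le> b" using in_W fin by (auto simp: b_def)
      then have "p \<noteq> b" "q \<noteq> b" using forbidden_walk_first_max[OF fw] pq(4-7) by (metis leD)+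
      moreover have "{a, p} \<in> insert {a, m} F" using pq(1) by (simp add: insert_commute)
      ultimately have "p = m" "q = m" using pq(2) none m(2) by (auto simp: doubleton_eq_iff)
      then show False using pq(3) by simp
    qed
    moreover have "{a, m} \<notin> F" using none m(3) by blast
    ultimately show False using facet edge by (auto simp: is_facet_iff_maximal)
  qed
  then show ?thesis using that by (auto simp: a_def b_def)
qed

text \<open>Below, \<open>c\<close> is the largest neighbour of \<open>Min W\<close> other than \<open>b = Max W\<close>; the
  vertices reachable from \<open>Min W\<close> avoiding \<open>b\<close> and \<open>c\<close> form, with \<open>c\<close>, the older part \<open>V(F\<^sup>1)\<close>.\<close>

lemma reach_from_Min_below:
  assumes free: "forbidden_free F" and fin: "finite W" and ac: "{Min W, c} \<in> F" "Min W < c"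
    and c_max: "\<forall>x. {Min W, x} \<in> F \<longrightarrow> x = b \<or> x \<le> c"
    and reach: "reach F (W - {b, c}) (Min W) v" and a_in: "Min W \<in> W - {b, c}"
  shows "v < c"
proof (rule ccontr)
  define a S where "a = Min W" and "S = W - {b, c}"
  assume "\<not> v < c"
  moreover have "v \<in> S" using reach_in_set[OF reach a_in] by (simp add: S_def)
  ultimately have cv: "c < v" by (auto simp: S_def)
  obtain p where p: "p \<noteq> []" "hd p = a" "last p = v" "distinct p" "walk F p" "set p \<subseteq> S"
    using reach_imp_walk[OF reach a_in] by (auto simp: a_def S_def)
  have "\<exists>w\<in>set p. c < w" using p(1,3) cv by (metis last_in_set)
  then obtain q w r where split: "p = q @ w # r" and cw: "c < w" and q_le: "\<forall>u\<in>set q. \<not> c < u"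
    using split_list_first_prop[of p "\<lambda>u. c < u"] by blast
  have q_S: "set q \<subseteq> S" and w_S: "w \<in> S" using p(6) split by auto
  then have q_less: "\<forall>u\<in>set q. u < c" using q_le by (force simp: S_def)
  have q_ne: "q \<noteq> []" using p(2) split cw assms(4) by (auto simp: a_def)
  have hd_q: "hd q = a" using p(2) split q_ne by simp
  have walk_q: "walk F (q @ [w])" using p(5) split by (simp add: walk_append walk_Cons)
  have dist_q: "distinct q" "w \<notin> set q" using p(4) split by auto
  have len_q: "length q \<ge> 2"
  proof (rule ccontr)
    assume "\<not> length q \<ge> 2"
    moreover have "length q \<noteq> 0" using q_ne by simp
    ultimately have "length q = 1" by linarith
    then have "q = [a]" using hd_q by (cases q) auto
    then have "{a, w} \<in> F" "w \<noteq> b" using walk_q w_S by (auto simp: S_def)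
    then show False using c_max cw by (auto simp: a_def)
  qed
  have "last q \<noteq> a" using dist_q(1) len_q hd_q by (cases q) auto
  moreover have "last q \<in> W" using q_S last_in_set[OF q_ne] by (auto simp: S_def)
  ultimately have "a < last q" using fin by (auto simp: a_def le_neq_implies_less)
  then have "forbidden_walk F w (rev q) c"
    using dist_q q_S cw q_less walk_q ac(1) q_ne hd_q len_q
    by (auto simp: forbidden_walk_def S_def walk_Cons walk_append walk_rev hd_rev last_rev
        insert_commute a_def)
  then show False using free by (auto simp: forbidden_free_def)
qed

lemma reach_from_Min_Max_edge:
  assumes free: "forbidden_free F" and fin: "finite W" and ac: "{Min W, c} \<in> F" and cb: "c < b"
    and below: "\<And>v. reach F (W - {b, c}) (Min W) v \<Longrightarrow> v < c"
    and reach: "reach F (W - {b, c}) (Min W) u" and a_in: "Min W \<in> W - {b, c}" and ub: "{u, b} \<in> F"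
  shows "u = Min W"
proof (rule ccontr)
  define a S where "a = Min W" and "S = W - {b, c}"
  assume ua: "u \<noteq> Min W"
  obtain p where p: "p \<noteq> []" "hd p = a" "last p = u" "distinct p" "walk F p" "set p \<subseteq> S"
    using reach_imp_walk[OF reach a_in] by (auto simp: a_def S_def)
  have p_less: "\<forall>v\<in>set p. v < c"
    using walk_reach_member[OF p(5,6)] p(2) below by (auto simp: a_def S_def)
  have "length p \<ge> 2" using p(1,2,3) ua by (cases p rule: remdups_adj.cases) (auto simp: a_def)
  moreover have "u \<in> W" using p(1,3,6) last_in_set[of p] by (auto simp: S_def)
  then have "a < u" using ua fin by (auto simp: a_def le_neq_implies_less)
  ultimately have "forbidden_walk F b (rev p) c"
    using p cb p_less ub ac
    by (auto simp: forbidden_walk_def S_def walk_Cons walk_append walk_rev hd_rev last_rev insert_commute a_def)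
  then show False using free by (auto simp: forbidden_free_def)
qed

lemma facet_Min_max_neighbour:
  assumes fin: "finite W" and card: "card W \<ge> 3" and facet: "is_facet W F"
  obtains c where "{Min W, c} \<in> F" "Min W < c" "c < Max W" "\<forall>x. {Min W, x} \<in> F \<longrightarrow> x = Max W \<or> x \<le> c"
proof -
  define N where "N = {x. {Min W, x} \<in> F \<and> x \<noteq> Max W}"
  have K: "F \<subseteq> KEdges W" using facet by (rule facet_subset_KEdges)
  have "N \<noteq> {}" using facet_Min_has_neighbour[OF fin card facet] by (auto simp: N_def)
  moreover have "N \<subseteq> W" using K by (auto simp: N_def KEdges_iff)
  then have "finite N" using fin by (rule finite_subset)
  ultimately have "Max N \<in> N" and "\<forall>x\<in>N. x \<le> Max N" by auto
  then have edge: "{Min W, Max N} \<in> F" and "Max N \<noteq> Max W"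
    and "\<forall>x. {Min W, x} \<in> F \<longrightarrow> x = Max W \<or> x \<le> Max N" by (auto simp: N_def)
  moreover have "Max N \<in> W" "Min W \<noteq> Max N" using edge K KEdges_iff by blast+
  ultimately show ?thesis using that fin by (metis Max_ge Min_le le_neq_implies_less)
qed

lemma facet_split_exists:
  assumes fin: "finite W" and card: "card W \<ge> 3" and facet: "is_facet W F"
  obtains V1 V2 where "vertex_split W V1 V2" "\<forall>e\<in>F. e = {Min W, Max W} \<or> e \<subseteq> V1 \<or> e \<subseteq> V2"
proof -
  define a b where "a = Min W" and "b = Max W"
  have "W \<noteq> {}" using card by auto
  then have a_in: "a \<in> W" and b_in: "b \<in> W" using fin by (auto simp: a_def b_def)
  have K: "F \<subseteq> KEdges W" and free: "forbidden_free F"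
    using facet by (auto simp: facet_subset_KEdges facet_forbidden_free)
  obtain c where ac: "{a, c} \<in> F" and a_less: "a < c" and c_less: "c < b"
    and c_max: "\<forall>x. {a, x} \<in> F \<longrightarrow> x = b \<or> x \<le> c"
    using facet_Min_max_neighbour[OF fin card facet] unfolding a_def b_def by blast
  have c_in: "c \<in> W" using ac K KEdges_iff by blast
  define S where "S = W - {b, c}"
  define Comp where "Comp = {v. reach F S a v}"
  have a_S: "a \<in> S" using a_in a_less c_less by (auto simp: S_def)
  have Comp_S: "Comp \<subseteq> S" using reach_in_set a_S by (auto simp: Comp_def)
  have below: "v < c" if "v \<in> Comp" for v
    using reach_from_Min_below[OF free fin] ac a_less c_max that a_S by (auto simp: Comp_def S_def a_def)
  have to_b: "u = a" if "u \<in> Comp" "{u, b} \<in> F" for u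
    using reach_from_Min_Max_edge[OF free fin] ac c_less below that a_S
    by (auto simp: Comp_def S_def a_def)
  have step: "v \<in> Comp \<or> v = c \<or> v = b" if "u \<in> Comp" "{u, v} \<in> F" for u v
  proof -
    have "v \<in> W" using that(2) K by (auto simp: KEdges_iff)
    then show ?thesis using that Comp_S reach_step[of F S a u v] by (auto simp: Comp_def S_def)
  qed
  define V1 V2 where "V1 = insert c Comp" and "V2 = W - Comp"
  have Comp_W: "Comp \<subseteq> W" and c_Comp: "c \<notin> Comp" and b_Comp: "b \<notin> Comp" using Comp_S by (auto simp: S_def)
  have fin_V1: "finite V1" using Comp_W fin by (auto simp: V1_def intro: finite_subset)
  have Max_V1: "Max V1 = c" using fin_V1 below by (intro Max_eqI) (auto simp: V1_def less_imp_le)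
  have "a \<in> Comp" by (simp add: Comp_def)
  then have "card {a, c} \<le> card V1" using fin_V1 by (intro card_mono) (auto simp: V1_def)
  then have "vertex_split W V1 V2"
    using fin Comp_W c_in c_Comp b_Comp b_in \<open>a \<in> Comp\<close> Max_V1 a_less c_less
    by unfold_locales (auto simp: V1_def V2_def a_def b_def)
  moreover have "e = {a, b} \<or> e \<subseteq> V1 \<or> e \<subseteq> V2" if e_F: "e \<in> F" for e
  proof -
    have "e \<in> KEdges W" using e_F K by blast
    then obtain u v where e: "e = {u, v}" by (rule KEdgesE)
    have "e \<subseteq> W" using e_F K KEdges_subset by blast
    moreover have "u \<in> Comp \<Longrightarrow> v \<in> Comp \<or> v = c \<or> (v = b \<and> u = a)"
      using step[of u v] to_b[of u] e_F e by auto
    moreover have "v \<in> Comp \<Longrightarrow> u \<in> Comp \<or> u = c \<or> (u = b \<and> v = a)"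
      using step[of v u] to_b[of v] e_F e by (auto simp: insert_commute)
    ultimately show ?thesis using e by (auto simp: V1_def V2_def)
  qed
  ultimately show ?thesis using that by (auto simp: a_def b_def)
qed

lemma (in vertex_split) facet_glue_parts:
  assumes facet: "is_facet W (glue W F1 F2)" and faces: "is_face V1 F1" "is_face V2 F2"
  shows "is_facet V1 F1" "is_facet V2 F2"
proof -
  have K: "F1 \<subseteq> KEdges V1" "F2 \<subseteq> KEdges V2" using faces by (auto simp: is_face_iff)
  have "G = F1" if G: "is_face V1 G" "F1 \<subseteq> G" for G
  proof -
    have eq: "glue W G F2 = glue W F1 F2"
      using facet glue_is_face[OF G(1) faces(2)] G(2) by (auto simp: is_facet_def)
    have "e \<in> F1" if e: "e \<in> G" for e
    proof -
      have "e \<in> KEdges V1" using G(1) e by (auto simp: is_face_iff)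
      then have "\<not> e \<subseteq> V2" "e \<noteq> {Min W, Max W}" using KEdges_V1_not_V2 by auto
      moreover have "e \<in> glue W F1 F2" using eq e by blast
      ultimately show ?thesis using K(2) KEdges_subset by blast
    qed
    then show ?thesis using G(2) by blast
  qed
  then show "is_facet V1 F1" using faces(1) by (auto simp: is_facet_def)
  have "G = F2" if G: "is_face V2 G" "F2 \<subseteq> G" for G
  proof -
    have eq: "glue W F1 G = glue W F1 F2"
      using facet glue_is_face[OF faces(1) G(1)] G(2) by (auto simp: is_facet_def)
    have "e \<in> F2" if e: "e \<in> G" for e
    proof -
      have "e \<in> KEdges V2" using G(1) e by (auto simp: is_face_iff)
      then have "\<not> e \<subseteq> V1" "e \<noteq> {Min W, Max W}" using KEdges_V2_not_V1 by auto
      moreover have "e \<in> glue W F1 F2" using eq e by blast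
      ultimately show ?thesis using K(1) KEdges_subset by blast
    qed
    then show ?thesis using G(2) by blast
  qed
  then show "is_facet V2 F2" using faces(2) by (auto simp: is_facet_def)
qed

lemma facet_decomposition:
  assumes fin: "finite W" and card: "card W \<ge> 3" and facet: "is_facet W F"
  obtains V1 V2 F1 F2 where "vertex_split W V1 V2" "is_facet V1 F1" "is_facet V2 F2" "F = glue W F1 F2"
proof -
  obtain V1 V2 where split: "vertex_split W V1 V2"
    and parts: "\<forall>e\<in>F. e = {Min W, Max W} \<or> e \<subseteq> V1 \<or> e \<subseteq> V2"
    using facet_split_exists[OF assms] by blast
  interpret vertex_split W V1 V2 by (fact split)
  define F1 F2 where "F1 = {e \<in> F. e \<subseteq> V1}" and "F2 = {e \<in> F. e \<subseteq> V2}"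
  have "{Min W, Max W} \<in> F" using Min_Max_edge_in_facet[OF fin _ facet] card by simp
  then have F_eq: "F = glue W F1 F2" using parts by (auto simp: F1_def F2_def)
  have K: "F \<subseteq> KEdges W" and free: "forbidden_free F"
    using facet by (auto simp: facet_subset_KEdges facet_forbidden_free)
  have "F1 \<subseteq> KEdges V1" "F2 \<subseteq> KEdges V2" using K KEdges_iff_subset by (auto simp: F1_def F2_def)
  moreover have "forbidden_free F1" "forbidden_free F2"
    using forbidden_free_mono[OF free] by (auto simp: F1_def F2_def)
  ultimately have faces: "is_face V1 F1" "is_face V2 F2" by (simp_all add: is_face_iff)
  have "is_facet W (glue W F1 F2)" using facet F_eq by simp
  from facet_glue_parts[OF this faces] show ?thesis using that split F_eq by blast
qed

lemma card_2_eq_Min_Max: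
  assumes "finite W" "card W = 2"
  shows "W = {Min W, Max W}"
proof -
  have "Min W < Max W" using Min_less_Max_card_ge_2[OF assms(1)] assms(2) by simp
  then have "card {Min W, Max W} = card W" using assms(2) by simp
  moreover have "W \<noteq> {}" using assms(2) by auto
  ultimately show ?thesis using assms(1) by (intro card_subset_eq[symmetric]) auto
qed

lemma card_2_cases:
  assumes "finite W" "card W = 2" "u \<in> W"
  shows "u = Min W \<or> u = Max W"
proof -
  have "{Min W, Max W} = W" using card_2_eq_Min_Max[OF assms(1,2)] by (rule sym)
  then have "u \<in> {Min W, Max W}" using assms(3) by simp
  then show ?thesis by blast
qed

definition connected_below_max :: "nat set \<Rightarrow> nat set set \<Rightarrow> bool" where
  "connected_below_max W F \<longleftrightarrow> (\<forall>u \<in> W - {Max W}. reach F (W - {Max W}) u (Min W))"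

lemma connected_below_max_mono:
  "connected_below_max W E \<Longrightarrow> E \<subseteq> E' \<Longrightarrow> connected_below_max W E'"
  unfolding connected_below_max_def using reach_mono by blast

definition escapes_upward :: "nat set \<Rightarrow> nat set set \<Rightarrow> bool" where
  "escapes_upward W F \<longleftrightarrow> (\<forall>u \<in> W. \<forall>t. u < t \<and> t < Max W \<longrightarrow>
      (\<exists>p w. reach F {v \<in> W. v < t} u p \<and> {p, w} \<in> F \<and> t < w))"

context vertex_split
begin

lemma connected_below_max_Un:
  assumes edge: "{Min W, Max V1} \<in> F1" and conn: "connected_below_max V1 F1" "connected_below_max V2 F2"
  shows "connected_below_max W (F1 \<union> F2)"
  unfolding connected_below_max_def
proof
  define F S where "F = F1 \<union> F2" and "S = W - {Max W}"
  have F1_F: "F1 \<subseteq> F" and F2_F: "F2 \<subseteq> F" by (auto simp: F_def)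
  have S1: "V1 - {Max V1} \<subseteq> S" and S2: "V2 - {Max V2} \<subseteq> S"
    using V1_subset V2_subset Max_V2 Max_notin_V1 by (auto simp: S_def)
  have cut_S: "Max V1 \<in> S" and Min_S: "Min W \<in> S"
    using cut_in_V1 V1_subset cut_less_Max Min_in_W Min_less_Max by (auto simp: S_def)
  have cut_Min: "reach F S (Max V1) (Min W)"
    using reach_edge[of "Max V1" "Min W" F S] edge F1_F cut_S Min_S by (auto simp: insert_commute)
  fix u assume u: "u \<in> W - {Max W}"
  have "reach F S u (Min W)"
  proof (cases "u \<in> V1 - {Max V1}")
    case True
    then have "reach F1 (V1 - {Max V1}) u (Min V1)" using conn(1) by (auto simp: connected_below_max_def)
    then show ?thesis using reach_mono[OF _ F1_F S1] Min_V1 by simp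
  next
    case False
    then have u_V2: "u \<in> V2 - {Max V2} \<or> u = Max V1" using u Un_eq Max_V2 by auto
    have cut_V2: "Max V1 \<in> V2 - {Max V2}" using cut_in_V2 cut_less_Max Max_V2 by auto
    have "reach F2 (V2 - {Max V2}) (Max V1) (Min V2)" using conn(2) cut_V2 by (auto simp: connected_below_max_def)
    then have "reach F S (Min V2) (Max V1)" by (rule reach_sym[OF reach_mono[OF _ F2_F S2]])
    moreover have "reach F S u (Min V2)" if "u \<in> V2 - {Max V2}"
      using conn(2) that reach_mono[OF _ F2_F S2] by (auto simp: connected_below_max_def)
    ultimately show ?thesis using u_V2 cut_Min by (auto intro: rtranclp_trans)
  qed
  then show "reach (F1 \<union> F2) (W - {Max W}) u (Min W)" by (simp add: F_def S_def)
qed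

lemma glue_escapes_upward:
  assumes conn: "connected_below_max V1 F1" and esc: "escapes_upward V1 F1" "escapes_upward V2 F2"
  shows "escapes_upward W (glue W F1 F2)"
  unfolding escapes_upward_def
proof (intro ballI allI impI)
  define F where "F = glue W F1 F2"
  have F1_F: "F1 \<subseteq> F" and F2_F: "F2 \<subseteq> F" by (auto simp: F_def)
  fix u t assume u: "u \<in> W" and ut: "u < t \<and> t < Max W"
  have "\<exists>p w. reach F {v \<in> W. v < t} u p \<and> {p, w} \<in> F \<and> t < w"
  proof (cases "u \<in> V2")
    case True
    then have "\<exists>p w. reach F2 {v \<in> V2. v < t} u p \<and> {p, w} \<in> F2 \<and> t < w"
      using esc(2) ut Max_V2 unfolding escapes_upward_def by simp
    then obtain p w where pw: "reach F2 {v \<in> V2. v < t} u p" "{p, w} \<in> F2" "t < w" by blast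
    moreover have "{v \<in> V2. v < t} \<subseteq> {v \<in> W. v < t}" using V2_subset by auto
    ultimately show ?thesis using reach_mono[OF _ F2_F] F2_F by blast
  next
    case False
    then have u1: "u \<in> V1" "u \<noteq> Max V1" using u Un_eq cut_in_V2 by auto
    show ?thesis
    proof (cases "t < Max V1")
      case True
      then have "\<exists>p w. reach F1 {v \<in> V1. v < t} u p \<and> {p, w} \<in> F1 \<and> t < w"
        using esc(1) ut u1 unfolding escapes_upward_def by simp
      then obtain p w where pw: "reach F1 {v \<in> V1. v < t} u p" "{p, w} \<in> F1" "t < w" by blast
      moreover have "{v \<in> V1. v < t} \<subseteq> {v \<in> W. v < t}" using V1_subset by auto
      ultimately show ?thesis using reach_mono[OF _ F1_F] F1_F by blast
    next
      case False
      text \<open>Below the threshold \<open>t \<ge> Max V1\<close>, the walk reaches \<open>Min W\<close> and leaves by the edge to \<open>Max W\<close>.\<close>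
      have "reach F1 (V1 - {Max V1}) u (Min V1)" using conn u1 by (auto simp: connected_below_max_def)
      moreover have "V1 - {Max V1} \<subseteq> {v \<in> W. v < t}"
        using V1_subset le_cut False by (auto simp: le_neq_implies_less)
      ultimately have "reach F {v \<in> W. v < t} u (Min W)" using reach_mono[OF _ F1_F] Min_V1 by metis
      moreover have "{Min W, Max W} \<in> F" by (simp add: F_def)
      ultimately show ?thesis using ut by blast
    qed
  qed
  then show "\<exists>p w. reach (glue W F1 F2) {v \<in> W. v < t} u p \<and> {p, w} \<in> glue W F1 F2 \<and> t < w"
    by (simp add: F_def)
qed

end

lemma facet_connected_escapes:
  "finite W \<Longrightarrow> card W \<ge> 2 \<Longrightarrow> is_facet W F \<Longrightarrow> connected_below_max W F \<and> escapes_upward W F"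
proof (induction "card W" arbitrary: W F rule: less_induct)
  case less
  show ?case
  proof (cases "card W = 2")
    case True
    then have W: "u = Min W" if "u \<in> W" "u \<noteq> Max W" for u
      using card_2_cases less(2) that by blast
    have "connected_below_max W F" using W by (auto simp: connected_below_max_def)
    moreover have "{Min W, Max W} \<in> F" using Min_Max_edge_in_facet less(2-4) by blast
    then have "escapes_upward W F" using W by (fastforce simp: escapes_upward_def)
    ultimately show ?thesis by blast
  next
    case False
    then have "card W \<ge> 3" using less(3) by simp
    then obtain V1 V2 F1 F2 where split: "vertex_split W V1 V2" and facets: "is_facet V1 F1" "is_facet V2 F2"
      and F_eq: "F = glue W F1 F2"
      using facet_decomposition less(2,4) by blast
    interpret vertex_split W V1 V2 by (fact split)
    have "connected_below_max V1 F1 \<and> escapes_upward V1 F1" "connected_below_max V2 F2 \<and> escapes_upward V2 F2"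
      using less(1) card_V1_less card_V2_less finite_V1 finite_V2 card_V1 card_V2 facets by blast+
    moreover have "{Min W, Max V1} \<in> F1" using Min_Max_edge_in_facet[OF finite_V1 card_V1 facets(1)] Min_V1 by simp
    ultimately have "connected_below_max W (F1 \<union> F2)" "escapes_upward W F"
      using connected_below_max_Un glue_escapes_upward F_eq by blast+
    then show ?thesis using connected_below_max_mono F_eq by blast
  qed
qed

context vertex_split
begin

lemma walk_to_Min_below_cut:
  assumes facet: "is_facet V1 F1" and x: "x \<in> V1" "x \<noteq> Max V1"
  obtains r where "r \<noteq> []" "hd r = x" "last r = Min W" "distinct r" "walk F1 r"
    "set r \<subseteq> V1" "\<forall>v\<in>set r. v < Max V1"
proof -
  have "reach F1 (V1 - {Max V1}) x (Min W)"
    using facet_connected_escapes[OF finite_V1 card_V1 facet] x Min_V1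
    by (auto simp: connected_below_max_def)
  then obtain r where "r \<noteq> []" "hd r = x" "last r = Min W" "distinct r" "walk F1 r" "set r \<subseteq> V1 - {Max V1}"
    using reach_imp_walk x by blast
  moreover have "\<forall>v\<in>set r. v < Max V1"
    using calculation(6) bspec[OF le_cut] by (metis Diff_iff insertI1 order.not_eq_order_implies_strict subsetD)
  ultimately show ?thesis using that by blast
qed

text \<open>An edge \<open>{x, y}\<close> across the cut, \<open>x \<in> V1\<close> and \<open>y \<in> V2\<close>, always closes a forbidden
  walk; this makes the glue of two facets maximal.\<close>

lemma cross_edge_above_cut:
  assumes facet: "is_facet V1 F1" and x: "x \<in> V1" "x \<noteq> Max V1" "x \<noteq> Min W"
    and y: "y \<notin> V1" "Max V1 < y"
    and that: "r \<noteq> []" "hd r = x" "last r = Min W" "distinct r" "walk F1 r" "set r \<subseteq> V1"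
      "\<forall>v\<in>set r. v < Max V1"
  shows "forbidden_walk (insert {x, y} (glue W F1 F2)) y r (Max V1)"
proof -
  have "length r \<ge> 2" using that(1-3) x(3) by (cases r rule: remdups_adj.cases) auto
  moreover have "Min W < x" using x V1_subset Min_le_W by (auto simp: le_neq_implies_less)
  moreover have "{Min W, Max V1} \<in> F1"
    using Min_Max_edge_in_facet[OF finite_V1 card_V1 facet] Min_V1 by simp
  ultimately show ?thesis
    using that y walk_mono[OF that(5), of "insert {x, y} (glue W F1 F2)"]
    by (auto simp: forbidden_walk_def walk_Cons walk_append insert_commute)
qed

end

context vertex_split
begin

lemma cross_edge_at_Min:
  assumes facets: "is_facet V1 F1" "is_facet V2 F2"
    and y: "y \<in> V2" "Max V1 < y" "y \<noteq> Max W"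
  obtains w zs where "forbidden_walk (insert {Min W, y} (glue W F1 F2)) w zs y"
proof -
  define a c where "a = Min W" and "c = Max V1"
  have "y < Max V2" using y le_Max_W V2_subset Max_V2 by (auto simp: le_neq_implies_less)
  then have "\<exists>p w. reach F2 {v \<in> V2. v < y} c p \<and> {p, w} \<in> F2 \<and> y < w"
    using facet_connected_escapes[OF finite_V2 card_V2 facets(2)] cut_in_V2 y(2)
    by (auto simp: escapes_upward_def c_def)
  then obtain p w where pw: "reach F2 {v \<in> V2. v < y} c p" "{p, w} \<in> F2" "y < w" by blast
  obtain q where q: "q \<noteq> []" "hd q = c" "last q = p" "distinct q" "walk F2 q" "set q \<subseteq> {v \<in> V2. v < y}"
    using reach_imp_walk[OF pw(1)] cut_in_V2 y(2) by (auto simp: c_def)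
  have w_V2: "w \<in> V2" and p_V2: "p \<in> V2"
    using pw(2) facet_subset_KEdges[OF facets(2)] KEdges_iff by blast+
  have ac: "{a, c} \<in> F1" using Min_Max_edge_in_facet[OF finite_V1 card_V1 facets(1)] Min_V1 by (simp add: a_def c_def)
  have "Min W \<le> p" "p \<noteq> Min W" using p_V2 V2_subset Min_le_W Min_notin_V2 by blast+
  then have "a < p" by (simp add: a_def)
  moreover have "a < c" using Min_less_cut by (simp add: a_def c_def)
  ultimately have "forbidden_walk (insert {a, y} (glue W F1 F2)) w (rev q @ [a]) y"
    unfolding forbidden_walk_def
  proof (intro conjI)
    show "distinct (w # (rev q @ [a]) @ [y])"
      using q(4,6) pw(3) w_V2 y(1,2) Min_notin_V2 \<open>a < c\<close> by (auto simp: a_def c_def)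
    have "walk (insert {a, y} (glue W F1 F2)) q" by (rule walk_mono[OF q(5)]) auto
    then show "walk (insert {a, y} (glue W F1 F2)) (w # (rev q @ [a]) @ [y])"
      using q(1-3) pw(2) ac
      by (auto simp: walk_Cons walk_append walk_rev hd_rev last_rev insert_commute)
    show "2 \<le> length (rev q @ [a])" using q(1) by (cases q) auto
    show "\<forall>v\<in>set (rev q @ [a]). v < y" using q(6) \<open>a < c\<close> y(2) by (auto simp: c_def)
    show "last (rev q @ [a]) < hd (rev q @ [a])" using q(1,3) \<open>a < p\<close> by (simp add: hd_rev)
  qed (use pw(3) in simp)
  then show ?thesis using that by (auto simp: a_def)
qed

lemma cross_edge_below_cut:
  assumes facets: "is_facet V1 F1" "is_facet V2 F2"
    and x: "x \<in> V1" "x \<noteq> Max V1" and y: "y \<in> V2" "y < Max V1"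
  obtains w zs where "forbidden_walk (insert {x, y} (glue W F1 F2)) w zs (Max V1)"
proof -
  define a c where "a = Min W" and "c = Max V1"
  have "c < Max V2" using cut_less_Max Max_V2 by (simp add: c_def)
  then have "\<exists>p w. reach F2 {v \<in> V2. v < c} y p \<and> {p, w} \<in> F2 \<and> c < w"
    using facet_connected_escapes[OF finite_V2 card_V2 facets(2)] y by (auto simp: escapes_upward_def c_def)
  then obtain p w where pw: "reach F2 {v \<in> V2. v < c} y p" "{p, w} \<in> F2" "c < w" by blast
  obtain q where q: "q \<noteq> []" "hd q = y" "last q = p" "distinct q" "walk F2 q" "set q \<subseteq> {v \<in> V2. v < c}"
    using reach_imp_walk[OF pw(1)] y by (auto simp: c_def)
  obtain r where r: "r \<noteq> []" "hd r = x" "last r = a" "distinct r" "walk F1 r" "set r \<subseteq> V1"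
    "\<forall>v\<in>set r. v < c"
    using walk_to_Min_below_cut[OF facets(1) x] by (auto simp: a_def c_def)
  have p_V2: "p \<in> V2" using pw(2) facet_subset_KEdges[OF facets(2)] KEdges_iff by blast
  have ac: "{a, c} \<in> F1" using Min_Max_edge_in_facet[OF finite_V1 card_V1 facets(1)] Min_V1 by (simp add: a_def c_def)
  have disjoint: "set q \<inter> set r = {}"
  proof -
    have False if "v \<in> set q" "v \<in> set r" for v
    proof -
      have "v \<in> V1 \<inter> V2" "v < c" using that q(6) r(6,7) by auto
      then show False using Int_eq by (simp add: c_def)
    qed
    then show ?thesis by blast
  qed
  have "Min W \<le> p" "p \<noteq> Min W" using p_V2 V2_subset Min_le_W Min_notin_V2 by blast+
  then have "a < p" by (simp add: a_def)
  then have "forbidden_walk (insert {x, y} (glue W F1 F2)) w (rev q @ r) c"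
    unfolding forbidden_walk_def
  proof (intro conjI)
    show "distinct (w # (rev q @ r) @ [c])" using q(4,6) r(4,7) disjoint pw(3) by auto
    have "walk (insert {x, y} (glue W F1 F2)) q" "walk (insert {x, y} (glue W F1 F2)) r"
      by (rule walk_mono[OF q(5)], auto, rule walk_mono[OF r(5)], auto)
    then show "walk (insert {x, y} (glue W F1 F2)) (w # (rev q @ r) @ [c])"
      using q(1-3) r(1-3) pw(2) ac
      by (auto simp: walk_Cons walk_append walk_rev hd_rev last_rev insert_commute)
    show "2 \<le> length (rev q @ r)" using q(1) r(1) by (cases q; cases r) auto
    show "\<forall>v\<in>set (rev q @ r). v < c" using q(6) r(7) by auto
    show "last (rev q @ r) < hd (rev q @ r)" using q(1,3) r(1,3) \<open>a < p\<close> by (simp add: hd_rev)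
  qed (use pw(3) in simp)
  then show ?thesis using that by (auto simp: c_def)
qed

lemma cross_edge_not_forbidden_free:
  assumes facets: "is_facet V1 F1" "is_facet V2 F2"
    and x: "x \<in> V1" "x \<noteq> Max V1" and y: "y \<in> V2" "y \<noteq> Max V1" and xy: "{x, y} \<noteq> {Min W, Max W}"
  shows "\<not> forbidden_free (insert {x, y} (glue W F1 F2))"
proof -
  have "\<exists>w zs z. forbidden_walk (insert {x, y} (glue W F1 F2)) w zs z"
  proof (cases "y < Max V1")
    case True
    then show ?thesis using cross_edge_below_cut[OF facets x y(1)] by metis
  next
    case False
    then have above: "Max V1 < y" using y(2) by simp
    show ?thesis
    proof (cases "x = Min W")
      case True
      then have "y \<noteq> Max W" using xy by auto
      then show ?thesis using cross_edge_at_Min[OF facets y(1) above] True by metis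
    next
      case False
      have "y \<notin> V1" using y Int_eq by auto
      obtain r where "r \<noteq> []" "hd r = x" "last r = Min W" "distinct r" "walk F1 r" "set r \<subseteq> V1"
        "\<forall>v\<in>set r. v < Max V1"
        using walk_to_Min_below_cut[OF facets(1) x] by blast
      then have "forbidden_walk (insert {x, y} (glue W F1 F2)) y r (Max V1)"
        by (rule cross_edge_above_cut[OF facets(1) x False \<open>y \<notin> V1\<close> above])
      then show ?thesis by blast
    qed
  qed
  then show ?thesis by (simp add: forbidden_free_def)
qed

lemma glue_is_facet:
  assumes facets: "is_facet V1 F1" "is_facet V2 F2"
  shows "is_facet W (glue W F1 F2)"
  unfolding is_facet_iff_maximal
proof (intro conjI ballI impI)
  show "is_face W (glue W F1 F2)" using glue_is_face facets by (simp add: is_facet_def)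
  fix e assume e_K: "e \<in> KEdges W" and e_notin: "e \<notin> glue W F1 F2"
  obtain u v where e: "e = {u, v}" "u \<in> W" "v \<in> W" using e_K by (rule KEdgesE)
  have side: "\<not> forbidden_free (insert e (glue W F1 F2))"
    if "e \<in> KEdges V" "e \<notin> F" "is_facet V F" "F \<subseteq> glue W F1 F2" for V F
  proof -
    have "\<not> forbidden_free (insert e F)" using that(1-3) by (auto simp: is_facet_iff_maximal)
    moreover have "insert e F \<subseteq> insert e (glue W F1 F2)" using that(4) by blast
    ultimately show ?thesis using forbidden_free_mono by blast
  qed
  show "\<not> forbidden_free (insert e (glue W F1 F2))"
  proof (cases "e \<subseteq> V1")
    case True
    then show ?thesis using side[OF _ _ facets(1)] e_K e_notin KEdges_iff_subset by blast
  next
    case not_V1: False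
    show ?thesis
    proof (cases "e \<subseteq> V2")
      case True
      then show ?thesis using side[OF _ _ facets(2)] e_K e_notin KEdges_iff_subset by blast
    next
      case False
      then have "u \<in> V1 - {Max V1} \<and> v \<in> V2 - {Max V1} \<or> v \<in> V1 - {Max V1} \<and> u \<in> V2 - {Max V1}"
        using not_V1 e Un_eq Int_eq by blast
      moreover have "{u, v} \<noteq> {Min W, Max W}" "{v, u} \<noteq> {Min W, Max W}" using e e_notin by auto
      ultimately show ?thesis
        using cross_edge_not_forbidden_free[OF facets, of u v] cross_edge_not_forbidden_free[OF facets, of v u]
        by (auto simp: e insert_commute)
    qed
  qed
qed

end

section \<open>Uniqueness of the decomposition\<close>

context vertex_split
begin

lemma Min_cut_edge_in_glue:
  assumes "is_facet V1 F1"
  shows "{Min W, Max V1} \<in> glue W F1 F2"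
  using Min_Max_edge_in_facet[OF finite_V1 card_V1 assms] Min_V1 by simp

lemma Min_neighbour_le_cut:
  assumes facets: "is_facet V1 F1" "is_facet V2 F2"
    and x: "{Min W, x} \<in> glue W F1 F2" "x \<noteq> Max W"
  shows "x \<le> Max V1"
proof -
  have "{Min W, x} \<notin> KEdges V2" using Min_notin_V2 by (simp add: KEdges_iff)
  then have "{Min W, x} \<notin> F2" using facet_subset_KEdges[OF facets(2)] by blast
  moreover have "{Min W, x} \<noteq> {Min W, Max W}" using x(2) by (simp add: doubleton_eq_iff)
  ultimately have "{Min W, x} \<in> KEdges V1" using x(1) facet_subset_KEdges[OF facets(1)] by blast
  then have "x \<in> V1" by (simp add: KEdges_iff)
  then show ?thesis using le_cut by blast
qed

lemma glue_mem_older: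
  assumes "F2 \<subseteq> KEdges V2" "e \<in> glue W F1 F2" "e \<subseteq> V1"
  shows "e \<in> F1"
proof -
  have "e \<notin> F2" using assms(1,3) KEdges_V2_not_V1 by blast
  moreover have "e \<noteq> {Min W, Max W}" using assms(3) Max_notin_V1 by blast
  ultimately show ?thesis using assms(2) by blast
qed

lemma glue_mem_younger:
  assumes "F1 \<subseteq> KEdges V1" "e \<in> glue W F1 F2" "e \<subseteq> V2"
  shows "e \<in> F2"
proof -
  have "e \<notin> F1" using assms(1,3) KEdges_V1_not_V2 by blast
  moreover have "e \<noteq> {Min W, Max W}" using assms(3) Min_notin_V2 by blast
  ultimately show ?thesis using assms(2) by blast
qed

lemma glue_restrict:
  assumes K: "F1 \<subseteq> KEdges V1" "F2 \<subseteq> KEdges V2"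
  shows "F1 = {e \<in> glue W F1 F2. e \<subseteq> V1}" "F2 = {e \<in> glue W F1 F2. e \<subseteq> V2}"
proof -
  show "F1 = {e \<in> glue W F1 F2. e \<subseteq> V1}"
  proof (intro set_eqI iffI)
    fix e assume "e \<in> F1"
    then show "e \<in> {e \<in> glue W F1 F2. e \<subseteq> V1}" using K(1) KEdges_subset by auto
  qed (use glue_mem_older[OF K(2)] in blast)
  show "F2 = {e \<in> glue W F1 F2. e \<subseteq> V2}"
  proof (intro set_eqI iffI)
    fix e assume "e \<in> F2"
    then show "e \<in> {e \<in> glue W F1 F2. e \<subseteq> V2}" using K(2) KEdges_subset by auto
  qed (use glue_mem_younger[OF K(1)] in blast)
qed

lemma reach_from_Min_stays_older:
  assumes K: "F1 \<subseteq> KEdges V1" "F2 \<subseteq> KEdges V2" and E: "E \<subseteq> glue W F1 F2"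
    and S: "\<forall>v\<in>S. v \<noteq> Max V1 \<and> v \<noteq> Max W" and reach: "reach E S (Min W) v"
  shows "v \<in> V1 - {Max V1}"
  using reach
proof (rule reach_closed)
  show "Min W \<in> V1 - {Max V1}" using Min_in_V1 Min_less_cut by (simp add: less_imp_neq)
  fix x y assume x: "x \<in> V1 - {Max V1}" and adj: "adjacent_in E S x y"
  then have "{x, y} \<in> glue W F1 F2" "y \<in> S" using E by (auto simp: adjacent_in_def)
  moreover have "x \<notin> V2" using x Int_eq by auto
  then have "{x, y} \<notin> F2" using K(2) by (auto simp: KEdges_iff)
  moreover have "y \<noteq> Max W" "y \<noteq> Max V1" using \<open>y \<in> S\<close> S by auto
  then have "{x, y} \<noteq> {Min W, Max W}" using x Max_notin_V1 by (auto simp: doubleton_eq_iff)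
  ultimately have "{x, y} \<in> F1" by simp
  then have "y \<in> V1" using K(1) by (auto simp: KEdges_iff)
  then show "y \<in> V1 - {Max V1}" using \<open>y \<noteq> Max V1\<close> by simp
qed

lemma glue_determines_split:
  assumes facets: "is_facet V1 F1" "is_facet V2 F2"
    and split': "vertex_split W V1' V2'" and facets': "is_facet V1' F1'" "is_facet V2' F2'"
    and eq: "glue W F1 F2 = glue W F1' F2'"
  shows "V1 \<subseteq> V1'"
proof -
  interpret S': vertex_split W V1' V2' by (fact split')
  have "{Min W, Max V1} \<in> glue W F1' F2'" using Min_cut_edge_in_glue[OF facets(1), of F2] unfolding eq .
  then have "Max V1 \<le> Max V1'" using cut_less_Max by (intro S'.Min_neighbour_le_cut[OF facets']) auto
  moreover have "{Min W, Max V1'} \<in> glue W F1 F2"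
    using S'.Min_cut_edge_in_glue[OF facets'(1), of F2'] unfolding eq .
  then have "Max V1' \<le> Max V1" using S'.cut_less_Max by (intro Min_neighbour_le_cut[OF facets]) auto
  ultimately have cut_eq: "Max V1 = Max V1'" by simp
  have K': "F1' \<subseteq> KEdges V1'" "F2' \<subseteq> KEdges V2'" using facets' by (auto dest: facet_subset_KEdges)
  have below_cut: "v \<in> V1'" if v: "v \<in> V1 - {Max V1}" for v
  proof -
    have "connected_below_max V1 F1" using facet_connected_escapes[OF finite_V1 card_V1 facets(1)] ..
    then have "reach F1 (V1 - {Max V1}) v (Min V1)" using v by (simp add: connected_below_max_def)
    then have "reach (glue W F1 F2) (V1 - {Max V1}) v (Min W)"
      unfolding Min_V1 by (rule reach_mono) auto
    then have "reach (glue W F1 F2) (V1 - {Max V1}) (Min W) v" by (rule reach_sym)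
    moreover have "\<forall>v\<in>V1 - {Max V1}. v \<noteq> Max V1' \<and> v \<noteq> Max W" using cut_eq Max_notin_V1 by auto
    ultimately show ?thesis using S'.reach_from_Min_stays_older[OF K'] eq by auto
  qed
  show ?thesis
  proof
    fix v assume "v \<in> V1"
    then show "v \<in> V1'" using below_cut cut_eq S'.cut_in_V1 by (cases "v = Max V1") auto
  qed
qed

lemma glue_unique:
  assumes facets: "is_facet V1 F1" "is_facet V2 F2"
    and split': "vertex_split W V1' V2'" and facets': "is_facet V1' F1'" "is_facet V2' F2'"
    and eq: "glue W F1 F2 = glue W F1' F2'"
  shows "V1 = V1'" "V2 = V2'" "F1 = F1'" "F2 = F2'"
proof -
  interpret S': vertex_split W V1' V2' by (fact split')
  show V1: "V1 = V1'"
    using glue_determines_split[OF assms] S'.glue_determines_split[OF facets' vertex_split_axioms facets eq[symmetric]]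
    by blast
  show V2: "V2 = V2'" using V2_eq S'.V2_eq V1 by simp
  have K: "F1 \<subseteq> KEdges V1" "F2 \<subseteq> KEdges V2" "F1' \<subseteq> KEdges V1'" "F2' \<subseteq> KEdges V2'"
    using facets facets' by (auto dest: facet_subset_KEdges)
  have "F1 = {e \<in> glue W F1 F2. e \<subseteq> V1}" by (rule glue_restrict(1)[OF K(1,2)])
  also have "\<dots> = {e \<in> glue W F1' F2'. e \<subseteq> V1'}" by (simp only: eq V1)
  also have "\<dots> = F1'" by (rule S'.glue_restrict(1)[OF K(3,4), symmetric])
  finally show "F1 = F1'" .
  have "F2 = {e \<in> glue W F1 F2. e \<subseteq> V2}" by (rule glue_restrict(2)[OF K(1,2)])
  also have "\<dots> = {e \<in> glue W F1' F2'. e \<subseteq> V2'}" by (simp only: eq V2)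
  also have "\<dots> = F2'" by (rule S'.glue_restrict(2)[OF K(3,4), symmetric])
  finally show "F2 = F2'" .
qed

end

section \<open>Decomposition trees\<close>

lemma card_verts_ge_2:
  assumes facet: "is_facet V F" and x: "x \<in> verts F" and fin: "finite (verts F)"
  shows "card (verts F) \<ge> 2"
proof -
  obtain e where e: "e \<in> F" "x \<in> e" using x by (auto simp: verts_def)
  then have "e \<in> KEdges V" using facet_subset_KEdges[OF facet] by blast
  then obtain u v where uv: "e = {u, v}" "u \<noteq> v" by (rule KEdgesE)
  have "e \<subseteq> verts F" using e(1) by (auto simp: verts_def)
  then have "card e \<le> card (verts F)" using fin by (rule card_mono[rotated])
  then show ?thesis using uv by simp
qed

lemma dtree_of_step_split:
  assumes fin: "finite V" and facet1: "is_facet (verts F1) F1"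
    and Un: "verts F1 \<union> verts F2 = V" and Int: "verts F1 \<inter> verts F2 = {Max (verts F1)}"
    and Min: "Min V \<in> verts F1" and Max: "Max V \<in> verts F2" and top: "{Min V, Max V} \<notin> F1"
  shows "vertex_split V (verts F1) (verts F2)"
proof -
  have fin1: "finite (verts F1)" using fin Un by (metis finite_Un)
  have card1: "card (verts F1) \<ge> 2" using card_verts_ge_2[OF facet1 Min fin1] .
  have "Max V \<notin> verts F1"
  proof
    assume "Max V \<in> verts F1"
    then have "Max V \<in> verts F1 \<inter> verts F2" using Max by blast
    then have "Max (verts F1) = Max V" using Int by simp
    moreover have "Min (verts F1) = Min V" using Min Un fin1 fin by (intro Min_eqI) auto
    ultimately show False using Min_Max_edge_in_facet[OF fin1 card1 facet1] top by simp
  qed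
  then show ?thesis using fin Un Int Min Max card1 unfolding vertex_split_def by blast
qed

lemma dtree_of_facet: "dtree_of W F T \<Longrightarrow> is_facet W F \<and> finite W \<and> card W \<ge> 2"
  by (induction rule: dtree_of.induct) (auto intro: card_ge_0_finite)

lemma dtree_of_label: "dtree_of W F T \<Longrightarrow> label T = W"
  by (induction rule: dtree_of.induct) auto

lemma facet_card_2:
  assumes fin: "finite W" and card: "card W = 2" and facet: "is_facet W F"
  shows "F = {{Min W, Max W}}"
proof -
  have "e = {Min W, Max W}" if "e \<in> F" for e
  proof -
    have "e \<in> KEdges W" using that facet_subset_KEdges[OF facet] by blast
    then obtain u v where uv: "e = {u, v}" "u \<in> W" "v \<in> W" "u \<noteq> v" by (rule KEdgesE)
    have "x = Min W \<or> x = Max W" if "x \<in> W" for x using card_2_cases[OF fin card] that by blast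
    then show ?thesis using uv by (auto simp: doubleton_eq_iff)
  qed
  moreover have "{Min W, Max W} \<in> F" using Min_Max_edge_in_facet[OF fin _ facet] card by simp
  ultimately show ?thesis by blast
qed

lemma dtree_of_unique: "dtree_of W F T \<Longrightarrow> dtree_of W F T' \<Longrightarrow> T = T'"
proof (induction arbitrary: T' rule: dtree_of.induct)
  case (base V F)
  from base(3) show ?case by (cases rule: dtree_of.cases) (use base(1) in auto)
next
  case (step V F F1 F2 T1 T2)
  from step.prems show ?case
  proof (cases rule: dtree_of.cases)
    case base
    then show ?thesis using step.hyps(2) by simp
  next
    case (step F1' F2' T1' T2')
    note s = step
    have split: "vertex_split V (verts F1) (verts F2)"
      by (rule dtree_of_step_split[OF step.hyps(1,8,10,11,12,13,6)])
    have split': "vertex_split V (verts F1') (verts F2')"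
      by (rule dtree_of_step_split[OF s(2,9,11,12,13,14,7)])
    have "glue V F1 F2 = glue V F1' F2'" using step.hyps(4) s(5) by simp
    note unique = vertex_split.glue_unique[OF split step.hyps(8,9) split' s(9,10) this]
    have "T1 = T1'" using step.IH(1) s(15) unique(1,3) by simp
    moreover have "T2 = T2'" using step.IH(2) s(16) unique(2,4) by simp
    ultimately show ?thesis using s(1) by simp
  qed
qed

lemma dtree_eq: "dtree_of W F T \<Longrightarrow> dtree W F = T"
  unfolding dtree_def using dtree_of_unique by blast

lemma (in vertex_split) dtree_of_glue:
  assumes t1: "dtree_of V1 F1 T1" and t2: "dtree_of V2 F2 T2"
  shows "dtree_of W (glue W F1 F2) (Node W T1 T2)"
proof -
  have facets: "is_facet V1 F1" "is_facet V2 F2" using dtree_of_facet t1 t2 by auto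
  have verts: "verts F1 = V1" "verts F2 = V2"
    using verts_facet[OF finite_V1 card_V1 facets(1)] verts_facet[OF finite_V2 card_V2 facets(2)] .
  have K: "F1 \<subseteq> KEdges V1" "F2 \<subseteq> KEdges V2" using facets by (auto dest: facet_subset_KEdges)
  have not_top: "{Min W, Max W} \<notin> F1" "{Min W, Max W} \<notin> F2"
    using K KEdges_V1_not_V2 KEdges_V2_not_V1 by auto
  have "e \<notin> F2" if "e \<in> F1" for e
  proof -
    have "e \<in> KEdges V1" using that K(1) by blast
    then have "\<not> e \<subseteq> V2" using KEdges_V1_not_V2 by simp
    then show ?thesis using K(2) KEdges_subset by blast
  qed
  then have disjoint: "F1 \<inter> F2 = {}" by blast
  show ?thesis
    using dtree_of.step[OF finite_W card_W glue_is_facet[OF facets] refl disjoint not_top]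
      facets t1 t2 Un_eq Int_eq Min_in_V1 Max_in_V2 unfolding verts by blast
qed

lemma dtree_of_exists: "finite W \<Longrightarrow> card W \<ge> 2 \<Longrightarrow> is_facet W F \<Longrightarrow> \<exists>T. dtree_of W F T"
proof (induction "card W" arbitrary: W F rule: less_induct)
  case less
  show ?case
  proof (cases "card W = 2")
    case True
    then show ?thesis using less dtree_of.base by blast
  next
    case False
    then have "card W \<ge> 3" using less(3) by simp
    then obtain V1 V2 F1 F2 where split: "vertex_split W V1 V2" and facets: "is_facet V1 F1" "is_facet V2 F2"
      and F_eq: "F = glue W F1 F2"
      using facet_decomposition less(2,4) by blast
    interpret vertex_split W V1 V2 by (fact split)
    obtain T1 T2 where "dtree_of V1 F1 T1" "dtree_of V2 F2 T2"
      using less(1)[OF card_V1_less finite_V1 card_V1 facets(1)]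
        less(1)[OF card_V2_less finite_V2 card_V2 facets(2)] by blast
    then show ?thesis using dtree_of_glue F_eq by blast
  qed
qed

lemma dtree_of_dtree: "finite W \<Longrightarrow> card W \<ge> 2 \<Longrightarrow> is_facet W F \<Longrightarrow> dtree_of W F (dtree W F)"
  using dtree_of_exists dtree_eq by metis

lemma dtree_card_2: "finite W \<Longrightarrow> card W = 2 \<Longrightarrow> is_facet W F \<Longrightarrow> dtree W F = Leaf W"
  using dtree_of.base dtree_eq by blast

lemma (in vertex_split) dtree_glue:
  assumes "is_facet V1 F1" "is_facet V2 F2"
  shows "dtree W (glue W F1 F2) = Node W (dtree V1 F1) (dtree V2 F2)"
  by (rule dtree_eq[OF dtree_of_glue[OF dtree_of_dtree[OF finite_V1 card_V1 assms(1)]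
        dtree_of_dtree[OF finite_V2 card_V2 assms(2)]]])

lemma dtree_of_edges: "dtree_of W F T \<Longrightarrow> F = edge_of ` set (traversal T)"
proof (induction rule: dtree_of.induct)
  case (base V F)
  then show ?case using facet_card_2[of V F] by (auto simp: edge_of_def card_ge_0_finite)
next
  case (step V F F1 F2 T1 T2)
  then have "label T1 = verts F1" "label T2 = verts F2" using dtree_of_label by auto
  then show ?case using step by (auto simp: edge_of_def)
qed

lemma dtree_of_length: "dtree_of W F T \<Longrightarrow> length (traversal T) + 3 = 2 * card W"
proof (induction rule: dtree_of.induct)
  case (step V F F1 F2 T1 T2)
  have fin: "finite (verts F1)" "finite (verts F2)" using step(1,10) by (metis finite_Un)+
  have "card (verts F1) + card (verts F2) = card V + 1" using card_Un_Int[OF fin] step(10,11) by simp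
  then show ?case using step by simp
qed simp

lemma dtree_of_labels: "dtree_of W F T \<Longrightarrow> X \<in> set (traversal T) \<Longrightarrow> X \<subseteq> W \<and> finite X \<and> card X \<ge> 2"
proof (induction arbitrary: X rule: dtree_of.induct)
  case (base V F)
  then show ?case by (auto intro: card_ge_0_finite)
next
  case (step V F F1 F2 T1 T2)
  have fin: "finite (verts F1)" "finite (verts F2)" using step(1,10) by (metis finite_Un)+
  show ?case
  proof (cases "X = V")
    case False
    then have "X \<in> set (traversal T1) \<or> X \<in> set (traversal T2)" using step.prems by simp
    then show ?thesis using step.IH step(10) fin by (auto intro: finite_subset)
  qed (use step.hyps(1,2) in simp)
qed

lemma dtree_label: "finite W \<Longrightarrow> card W \<ge> 2 \<Longrightarrow> is_facet W F \<Longrightarrow> label (dtree W F) = W"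
  using dtree_of_dtree dtree_of_label by blast

lemma dtree_length:
  "finite W \<Longrightarrow> card W \<ge> 2 \<Longrightarrow> is_facet W F \<Longrightarrow> length (traversal (dtree W F)) + 3 = 2 * card W"
  using dtree_of_dtree dtree_of_length by blast

lemma dtree_edges:
  "finite W \<Longrightarrow> card W \<ge> 2 \<Longrightarrow> is_facet W F \<Longrightarrow> F = edge_of ` set (traversal (dtree W F))"
  using dtree_of_dtree dtree_of_edges by blast

lemma dtree_labels:
  "finite W \<Longrightarrow> card W \<ge> 2 \<Longrightarrow> is_facet W F \<Longrightarrow> X \<in> set (traversal (dtree W F)) \<Longrightarrow>
    X \<subseteq> W \<and> finite X \<and> card X \<ge> 2"
  using dtree_of_dtree dtree_of_labels by blast

section \<open>The order on facets\<close>

lemma set_gt_irrefl: "\<not> set_gt X X"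
  by (simp add: set_gt_def)

lemma set_gt_card: "card X > card Y \<Longrightarrow> set_gt X Y"
  by (simp add: set_gt_def)

lemma Min_symdiff:
  assumes "finite X" "finite Y" "X \<noteq> Y"
  shows "Min (X - Y \<union> (Y - X)) \<in> X - Y \<union> (Y - X)" "\<forall>u \<in> X - Y \<union> (Y - X). Min (X - Y \<union> (Y - X)) \<le> u"
proof -
  have fin: "finite (X - Y \<union> (Y - X))" and ne: "X - Y \<union> (Y - X) \<noteq> {}" using assms by auto
  show "Min (X - Y \<union> (Y - X)) \<in> X - Y \<union> (Y - X)" using Min_in[OF fin ne] .
  show "\<forall>u \<in> X - Y \<union> (Y - X). Min (X - Y \<union> (Y - X)) \<le> u" using Min_le[OF fin] by blast
qed

lemma set_gt_same_card_trans:
  assumes fin: "finite X" "finite Y" "finite Z"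
    and XY: "X \<noteq> Y" "Min (X - Y \<union> (Y - X)) \<in> Y"
    and YZ: "Y \<noteq> Z" "Min (Y - Z \<union> (Z - Y)) \<in> Z"
  shows "X \<noteq> Z \<and> Min (X - Z \<union> (Z - X)) \<in> Z"
proof -
  define p q where "p = Min (X - Y \<union> (Y - X))" and "q = Min (Y - Z \<union> (Z - Y))"
  note P = Min_symdiff[OF fin(1,2) XY(1), folded p_def]
  note Q = Min_symdiff[OF fin(2,3) YZ(1), folded q_def]
  have p: "p \<in> Y" "p \<notin> X" using P(1) XY(2) by (auto simp: p_def)
  have q: "q \<in> Z" "q \<notin> Y" using Q(1) YZ(2) by (auto simp: q_def)
  have agree_XY: "u \<in> X \<longleftrightarrow> u \<in> Y" if "u < p" for u using P(2) that by (meson DiffI UnCI leD)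
  have agree_YZ: "u \<in> Y \<longleftrightarrow> u \<in> Z" if "u < q" for u using Q(2) that by (meson DiffI UnCI leD)
  define m where "m = min p q"
  have m: "m \<in> X - Z \<union> (Z - X)" "m \<in> Z"
  proof -
    have "p \<noteq> q" using p q by auto
    then show "m \<in> X - Z \<union> (Z - X)" "m \<in> Z"
      using p q agree_XY agree_YZ by (cases "p < q"; simp add: m_def min_def; blast)+
  qed
  have "m \<le> u" if u: "u \<in> X - Z \<union> (Z - X)" for u
  proof (rule ccontr)
    assume "\<not> m \<le> u"
    then have "u < p" "u < q" by (simp_all add: m_def not_le)
    then show False using agree_XY agree_YZ u by blast
  qed
  then have "Min (X - Z \<union> (Z - X)) = m" using fin m(1) by (intro Min_eqI) auto
  then show ?thesis using m by auto
qed

lemma set_gt_trans: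
  assumes "finite X" "finite Y" "finite Z" "set_gt X Y" "set_gt Y Z"
  shows "set_gt X Z"
proof (cases "card X = card Y \<and> card Y = card Z")
  case True
  then have "X \<noteq> Y \<and> Min (X - Y \<union> (Y - X)) \<in> Y" "Y \<noteq> Z \<and> Min (Y - Z \<union> (Z - Y)) \<in> Z"
    using assms(4,5) by (auto simp: set_gt_def)
  then show ?thesis using set_gt_same_card_trans[OF assms(1-3)] True by (auto simp: set_gt_def)
next
  case False
  moreover have "card X \<ge> card Y" "card Y \<ge> card Z" using assms(4,5) by (auto simp: set_gt_def)
  ultimately have "card X > card Z" by linarith
  then show ?thesis by (rule set_gt_card)
qed

lemma set_gt_total:
  assumes "finite X" "finite Y" "X \<noteq> Y"
  shows "set_gt X Y \<or> set_gt Y X"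
proof (cases "card X = card Y")
  case True
  have "Min (X - Y \<union> (Y - X)) \<in> X - Y \<union> (Y - X)" using Min_symdiff[OF assms] by simp
  moreover have "Y - X \<union> (X - Y) = X - Y \<union> (Y - X)" by blast
  ultimately show ?thesis using True assms(3) by (auto simp: set_gt_def)
qed (auto simp: set_gt_def)

lemma not_set_gt_subset:
  assumes "finite Y" "X \<subseteq> Y"
  shows "\<not> set_gt X Y"
proof
  assume gt: "set_gt X Y"
  have "card X \<le> card Y" using assms by (rule card_mono)
  then have "card X = card Y" using gt by (auto simp: set_gt_def)
  then have "X = Y" using card_subset_eq[OF assms] by simp
  then show False using gt set_gt_irrefl by simp
qed

definition lex_gt :: "nat set list \<Rightarrow> nat set list \<Rightarrow> bool" where
  "lex_gt xs ys \<longleftrightarrow> (\<exists>k. k < length xs \<and> k < length ys \<and> take k xs = take k ys \<and> set_gt (xs ! k) (ys ! k))"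

lemma fac_gt_iff_lex_gt: "fac_gt V F G \<longleftrightarrow> lex_gt (traversal (dtree V F)) (traversal (dtree V G))"
  by (simp add: fac_gt_def lex_gt_def Let_def)

lemma lex_gt_Nil: "\<not> lex_gt [] ys"
  by (simp add: lex_gt_def)

lemma lex_gt_Cons: "lex_gt (x # xs) (y # ys) \<longleftrightarrow> set_gt x y \<or> (x = y \<and> lex_gt xs ys)"
proof
  assume "lex_gt (x # xs) (y # ys)"
  then obtain k where k: "k < length (x # xs)" "k < length (y # ys)" "take k (x # xs) = take k (y # ys)"
    "set_gt ((x # xs) ! k) ((y # ys) ! k)" by (auto simp: lex_gt_def)
  then show "set_gt x y \<or> (x = y \<and> lex_gt xs ys)"
    by (cases k) (auto simp: lex_gt_def)
next
  assume "set_gt x y \<or> (x = y \<and> lex_gt xs ys)"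
  then show "lex_gt (x # xs) (y # ys)"
  proof
    assume "set_gt x y"
    then show ?thesis unfolding lex_gt_def by (intro exI[of _ 0]) auto
  next
    assume "x = y \<and> lex_gt xs ys"
    then obtain k where "x = y" "k < length xs" "k < length ys" "take k xs = take k ys" "set_gt (xs ! k) (ys ! k)"
      by (auto simp: lex_gt_def)
    then show ?thesis unfolding lex_gt_def by (intro exI[of _ "Suc k"]) auto
  qed
qed

lemma lex_gt_append:
  "length xs = length xs' \<Longrightarrow> lex_gt (xs @ ys) (xs' @ ys') \<longleftrightarrow> lex_gt xs xs' \<or> (xs = xs' \<and> lex_gt ys ys')"
proof (induction xs arbitrary: xs')
  case (Cons x xs)
  then obtain y ys0 where "xs' = y # ys0" "length xs = length ys0" by (cases xs') auto
  then show ?case using Cons.IH by (auto simp: lex_gt_Cons)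
qed (simp add: lex_gt_Nil)

lemma lex_gt_irrefl: "\<not> lex_gt xs xs"
  by (auto simp: lex_gt_def set_gt_irrefl)

lemma lex_gt_trans:
  "\<forall>X \<in> set xs \<union> set ys \<union> set zs. finite X \<Longrightarrow> lex_gt xs ys \<Longrightarrow> lex_gt ys zs \<Longrightarrow> lex_gt xs zs"
proof (induction xs arbitrary: ys zs)
  case (Cons x xs)
  then obtain y ys0 z zs0 where "ys = y # ys0" "zs = z # zs0"
    by (metis lex_gt_Nil neq_Nil_conv lex_gt_def length_0_conv less_nat_zero_code)
  then show ?case using Cons set_gt_trans[of x y z] by (auto simp: lex_gt_Cons)
qed (simp add: lex_gt_Nil)

lemma lex_gt_total:
  "\<forall>X \<in> set xs \<union> set ys. finite X \<Longrightarrow> length xs = length ys \<Longrightarrow> xs \<noteq> ys \<Longrightarrow> lex_gt xs ys \<or> lex_gt ys xs"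
proof (induction xs arbitrary: ys)
  case (Cons x xs)
  then obtain y ys0 where "ys = y # ys0" by (cases ys) auto
  then show ?case using Cons set_gt_total[of x y] by (auto simp: lex_gt_Cons)
qed simp

lemma traversal_label_Cons: "\<exists>r. traversal T = label T # r"
  by (cases T) auto

lemma firstborns_subset_traversal: "firstborns T \<subseteq> set (traversal T)"
proof (induction T)
  case (Node X T1 T2)
  then show ?case using traversal_label_Cons[of T1] by force
qed simp

lemma Lset_subset_traversal: "Lset T \<subseteq> set (traversal T)"
  using firstborns_subset_traversal[of T] traversal_label_Cons[of T] by (force simp: Lset_def)

lemma sigma_tree_subset: "sigma_tree T \<subseteq> edge_of ` set (traversal T)"
proof (induction T)
  case (Node X T1 T2)
  then show ?case using Lset_subset_traversal[of T1] by auto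
qed simp

lemma edge_of_subset: "X \<subseteq> V \<Longrightarrow> finite X \<Longrightarrow> card X \<ge> 2 \<Longrightarrow> edge_of X \<subseteq> V"
  using Min_in Max_in by (fastforce simp: edge_of_def)

lemma sigma_subset:
  assumes "finite W" "card W \<ge> 2" "is_facet W F" "e \<in> sigma W F"
  shows "e \<subseteq> W"
proof -
  obtain X where "X \<in> set (traversal (dtree W F))" "e = edge_of X"
    using sigma_tree_subset assms(4) by (auto simp: sigma_def)
  then show ?thesis using dtree_labels[OF assms(1-3)] edge_of_subset by blast
qed

lemma firstborn_edge_in_facet:
  assumes "finite W" "card W \<ge> 2" "is_facet W F" "X \<in> firstborns (dtree W F)"
  shows "edge_of X \<in> F"
  using dtree_edges[OF assms(1-3)] firstborns_subset_traversal assms(4) by blast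

context vertex_split
begin

lemma fac_gt_glue_iff:
  assumes facets: "is_facet V1 F1" "is_facet V2 F2"
    and split': "vertex_split W V1' V2'" and facets': "is_facet V1' G1" "is_facet V2' G2"
  shows "fac_gt W (glue W F1 F2) (glue W G1 G2) \<longleftrightarrow>
    set_gt V1 V1' \<or> (V1 = V1' \<and> (fac_gt V1 F1 G1 \<or> (F1 = G1 \<and> fac_gt V2 F2 G2)))"
proof -
  interpret S': vertex_split W V1' V2' by (fact split')
  define t1 t2 s1 s2 where "t1 = traversal (dtree V1 F1)" and "t2 = traversal (dtree V2 F2)"
    and "s1 = traversal (dtree V1' G1)" and "s2 = traversal (dtree V2' G2)"
  have "fac_gt W (glue W F1 F2) (glue W G1 G2) \<longleftrightarrow> lex_gt (t1 @ t2) (s1 @ s2)"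
    unfolding fac_gt_iff_lex_gt dtree_glue[OF facets] S'.dtree_glue[OF facets'] t1_def t2_def s1_def s2_def
    by (simp add: lex_gt_Cons set_gt_irrefl)
  also have "\<dots> \<longleftrightarrow> set_gt V1 V1' \<or> (V1 = V1' \<and> (fac_gt V1 F1 G1 \<or> (F1 = G1 \<and> fac_gt V2 F2 G2)))"
  proof (cases "V1 = V1'")
    case True
    then have V2: "V2 = V2'" using V2_eq S'.V2_eq by simp
    have "length t1 = length s1"
      using dtree_length[OF finite_V1 card_V1 facets(1)] dtree_length[OF S'.finite_V1 S'.card_V1 facets'(1)]
        True by (simp add: t1_def s1_def)
    moreover have "t1 = s1 \<longleftrightarrow> F1 = G1"
      using dtree_edges[OF finite_V1 card_V1 facets(1)] dtree_edges[OF S'.finite_V1 S'.card_V1 facets'(1)] True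
      by (auto simp: t1_def s1_def)
    ultimately show ?thesis using lex_gt_append True V2
      by (simp add: fac_gt_iff_lex_gt t1_def s1_def t2_def s2_def set_gt_irrefl)
  next
    case False
    obtain r1 r2 where "t1 = V1 # r1" "s1 = V1' # r2"
      using traversal_label_Cons dtree_label[OF finite_V1 card_V1 facets(1)]
        dtree_label[OF S'.finite_V1 S'.card_V1 facets'(1)] by (metis t1_def s1_def)
    then show ?thesis using False by (simp add: lex_gt_Cons)
  qed
  finally show ?thesis .
qed

lemma sigma_glue:
  assumes "is_facet V1 F1" "is_facet V2 F2"
  shows "sigma W (glue W F1 F2) = (if card W \<le> 3 then {}
      else if V1 = {Min W, min2 W} then sigma V2 F2 else sigma V2 F2 \<union> edge_of ` Lset (dtree V1 F1))"
  using dtree_label[OF finite_V1 card_V1 assms(1)] unfolding sigma_def dtree_glue[OF assms] by simp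

end

lemma dtree_of_firstborns_connected:
  "dtree_of Y F T \<Longrightarrow> connected_below_max Y (edge_of ` firstborns T)"
proof (induction rule: dtree_of.induct)
  case (base V F)
  have "finite V" using base(1) by (simp add: card_ge_0_finite)
  then have "u = Min V" if "u \<in> V - {Max V}" for u using card_2_cases[of V u] base(1) that by blast
  then show ?case by (auto simp: connected_below_max_def)
next
  case (step V F F1 F2 T1 T2)
  have split: "vertex_split V (verts F1) (verts F2)"
    by (rule dtree_of_step_split[OF step.hyps(1,8,10,11,12,13,6)])
  interpret vertex_split V "verts F1" "verts F2" by (fact split)
  have labels: "label T1 = verts F1" using dtree_of_label step.hyps(14) by blast
  have "{Min V, Max (verts F1)} \<in> insert (edge_of (verts F1)) (edge_of ` firstborns T1)"
    using Min_V1 by (simp add: edge_of_def)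
  moreover have "connected_below_max (verts F1) (insert (edge_of (verts F1)) (edge_of ` firstborns T1))"
    by (rule connected_below_max_mono[OF step.IH(1)]) blast
  ultimately have "connected_below_max V (insert (edge_of (verts F1)) (edge_of ` firstborns T1) \<union>
      edge_of ` firstborns T2)"
    by (rule connected_below_max_Un[OF _ _ step.IH(2)])
  then show ?case using labels by (simp add: image_Un)
qed

context vertex_split
begin

text \<open>The edges of \<open>L(T(F\<^sup>1))\<close> connect all of \<open>V(F\<^sup>1)\<close>; lying in \<open>G\<close> they would force
  \<open>V(F\<^sup>1) \<subseteq> V(G\<^sup>1)\<close>.\<close>

lemma Lset_edge_missing:
  assumes facets: "is_facet V1 F1" "is_facet V2 F2"
    and split': "vertex_split W V1' V2'" and facets': "is_facet V1' G1" "is_facet V2' G2"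
    and gt: "set_gt V1 V1'"
  shows "\<exists>X \<in> Lset (dtree V1 F1). edge_of X \<notin> glue W G1 G2"
proof (rule ccontr)
  interpret S': vertex_split W V1' V2' by (fact split')
  assume "\<not> ?thesis"
  then have sub: "edge_of ` Lset (dtree V1 F1) \<subseteq> glue W G1 G2" by blast
  define c where "c = Max V1"
  have tree: "dtree_of V1 F1 (dtree V1 F1)" using dtree_of_dtree[OF finite_V1 card_V1 facets(1)] .
  have "edge_of (label (dtree V1 F1)) \<in> glue W G1 G2" using sub by (auto simp: Lset_def)
  then have top: "{Min W, c} \<in> glue W G1 G2"
    using dtree_of_label[OF tree] Min_V1 by (simp add: edge_of_def c_def)
  then have "c \<le> Max V1'" using cut_less_Max by (intro S'.Min_neighbour_le_cut[OF facets']) (auto simp: c_def)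
  have K': "G1 \<subseteq> KEdges V1'" "G2 \<subseteq> KEdges V2'" using facets' by (auto dest: facet_subset_KEdges)
  have older: "v \<in> V1'" if v: "v \<in> V1 - {c}" for v
  proof -
    have "reach (edge_of ` firstborns (dtree V1 F1)) (V1 - {c}) v (Min V1)"
      using dtree_of_firstborns_connected[OF tree] v by (simp add: connected_below_max_def c_def)
    then have reach: "reach (edge_of ` firstborns (dtree V1 F1)) (V1 - {c}) (Min W) v"
      unfolding Min_V1 by (rule reach_sym)
    have E: "edge_of ` firstborns (dtree V1 F1) \<subseteq> glue W G1 G2" using sub by (auto simp: Lset_def)
    have S: "\<forall>v\<in>V1 - {c}. v \<noteq> Max V1' \<and> v \<noteq> Max W"
    proof
      fix v assume "v \<in> V1 - {c}"
      then have "v < c" "v \<noteq> Max W" using le_cut Max_notin_V1 by (auto simp: c_def order.not_eq_order_implies_strict)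
      then show "v \<noteq> Max V1' \<and> v \<noteq> Max W" using \<open>c \<le> Max V1'\<close> by simp
    qed
    show ?thesis using S'.reach_from_Min_stays_older[OF K' E S reach] by simp
  qed
  have "{Min W, c} \<notin> G2" using K'(2) S'.Min_notin_V2 by (auto simp: KEdges_iff)
  moreover have "{Min W, c} \<noteq> {Min W, Max W}" using cut_less_Max by (simp add: c_def doubleton_eq_iff)
  ultimately have "{Min W, c} \<in> G1" using top by simp
  then have "c \<in> V1'" using K'(1) by (auto simp: KEdges_iff)
  then have "V1 \<subseteq> V1'" using older by blast
  then show False using not_set_gt_subset[OF S'.finite_V1] gt by blast
qed

end

section \<open>Condition (SH1)\<close>

context vertex_split
begin

lemma edge_of_older_notin_glue:
  assumes "F2 \<subseteq> KEdges V2" "X \<subseteq> V1" "finite X" "card X \<ge> 2" "edge_of X \<notin> F1"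
  shows "edge_of X \<notin> glue W F1 F2"
proof
  assume "edge_of X \<in> glue W F1 F2"
  from glue_mem_older[OF assms(1) this edge_of_subset[OF assms(2-4)]] show False using assms(5) by simp
qed

lemma edge_of_younger_notin_glue:
  assumes "F1 \<subseteq> KEdges V1" "X \<subseteq> V2" "finite X" "card X \<ge> 2" "edge_of X \<notin> F2"
  shows "edge_of X \<notin> glue W F1 F2"
proof
  assume "edge_of X \<in> glue W F1 F2"
  from glue_mem_younger[OF assms(1) this edge_of_subset[OF assms(2-4)]] show False using assms(5) by simp
qed

end

lemma fac_gt_decompose:
  assumes fin: "finite W" and card: "card W \<ge> 3" and facets: "is_facet W F" "is_facet W G"
    and gt: "fac_gt W F G"
  obtains V1 V2 F1 F2 V1' V2' G1 G2 where
    "vertex_split W V1 V2" "is_facet V1 F1" "is_facet V2 F2" "F = glue W F1 F2"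
    "vertex_split W V1' V2'" "is_facet V1' G1" "is_facet V2' G2" "G = glue W G1 G2"
    "set_gt V1 V1' \<or> V1 = V1' \<and> V2 = V2' \<and> (fac_gt V1 F1 G1 \<or> F1 = G1 \<and> fac_gt V2 F2 G2)"
proof -
  obtain V1 V2 F1 F2 where split: "vertex_split W V1 V2" and facets1: "is_facet V1 F1" "is_facet V2 F2"
    and F_eq: "F = glue W F1 F2" using facet_decomposition[OF fin card facets(1)] by blast
  obtain V1' V2' G1 G2 where split': "vertex_split W V1' V2'" and facets2: "is_facet V1' G1" "is_facet V2' G2"
    and G_eq: "G = glue W G1 G2" using facet_decomposition[OF fin card facets(2)] by blast
  have "set_gt V1 V1' \<or> V1 = V1' \<and> (fac_gt V1 F1 G1 \<or> F1 = G1 \<and> fac_gt V2 F2 G2)"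
    using gt vertex_split.fac_gt_glue_iff[OF split facets1 split' facets2] F_eq G_eq by simp
  moreover have "V1 = V1' \<Longrightarrow> V2 = V2'" using vertex_split.V2_eq[OF split] vertex_split.V2_eq[OF split'] by simp
  ultimately show ?thesis using that[OF split facets1 F_eq split' facets2 G_eq] by blast
qed

lemma fac_gt_firstborn_edge_missing:
  "finite W \<Longrightarrow> card W \<ge> 2 \<Longrightarrow> is_facet W F \<Longrightarrow> is_facet W G \<Longrightarrow> fac_gt W F G \<Longrightarrow>
    \<exists>X \<in> firstborns (dtree W F). edge_of X \<notin> G"
proof (induction "card W" arbitrary: W F G rule: less_induct)
  case less
  note fin = less(2) and facet = less(4) and facet' = less(5) and gt = less(6)
  show ?case
  proof (cases "card W = 2")
    case True
    then show ?thesis using gt facet_card_2[OF fin True facet] facet_card_2[OF fin True facet']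
      by (simp add: fac_gt_iff_lex_gt lex_gt_irrefl)
  next
    case False
    then have "card W \<ge> 3" using less(3) by simp
    then obtain V1 V2 F1 F2 V1' V2' G1 G2 where split: "vertex_split W V1 V2"
      and facets: "is_facet V1 F1" "is_facet V2 F2" and F_eq: "F = glue W F1 F2"
      and split': "vertex_split W V1' V2'" and facets': "is_facet V1' G1" "is_facet V2' G2"
      and G_eq: "G = glue W G1 G2"
      and cases: "set_gt V1 V1' \<or> V1 = V1' \<and> V2 = V2' \<and> (fac_gt V1 F1 G1 \<or> F1 = G1 \<and> fac_gt V2 F2 G2)"
      by (rule fac_gt_decompose[OF fin _ facet facet' gt])
    interpret vertex_split W V1 V2 by (fact split)
    have tree: "firstborns (dtree W F) = Lset (dtree V1 F1) \<union> firstborns (dtree V2 F2)"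
      using dtree_glue[OF facets] F_eq by (auto simp: Lset_def)
    have K: "G1 \<subseteq> KEdges V1'" "G2 \<subseteq> KEdges V2'" using facets' by (auto dest: facet_subset_KEdges)
    consider "set_gt V1 V1'" | "V1 = V1'" "fac_gt V1 F1 G1" | "V2 = V2'" "fac_gt V2 F2 G2"
      using cases by blast
    then show ?thesis
    proof cases
      case 1
      then show ?thesis using Lset_edge_missing[OF facets split' facets'] G_eq tree by blast
    next
      case 2
      then obtain X where X: "X \<in> firstborns (dtree V1 F1)" "edge_of X \<notin> G1"
        using less(1)[OF card_V1_less finite_V1 card_V1 facets(1)] facets'(1) by auto
      then have "X \<subseteq> V1' \<and> finite X \<and> card X \<ge> 2"
        using dtree_labels[OF finite_V1 card_V1 facets(1)] firstborns_subset_traversal 2(1) by blast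
      then have "edge_of X \<notin> G"
        using vertex_split.edge_of_older_notin_glue[OF split' K(2)] X(2) G_eq by blast
      then show ?thesis using X(1) tree by (auto simp: Lset_def)
    next
      case 3
      then obtain X where X: "X \<in> firstborns (dtree V2 F2)" "edge_of X \<notin> G2"
        using less(1)[OF card_V2_less finite_V2 card_V2 facets(2)] facets'(2) by auto
      then have "X \<subseteq> V2' \<and> finite X \<and> card X \<ge> 2"
        using dtree_labels[OF finite_V2 card_V2 facets(2)] firstborns_subset_traversal 3(1) by blast
      then have "edge_of X \<notin> G"
        using vertex_split.edge_of_younger_notin_glue[OF split' K(1)] X(2) G_eq by blast
      then show ?thesis using X(1) tree by blast
    qed
  qed
qed

lemma fac_gt_irrefl: "\<not> fac_gt V F F"
  by (simp add: fac_gt_iff_lex_gt lex_gt_irrefl)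

lemma facet_card_le_3:
  assumes "finite W" "card W \<le> 3" "is_facet W F"
  shows "F = KEdges W"
proof -
  have "is_face W (KEdges W)" using forbidden_free_card_le_3[OF assms(1,2)] by (simp add: is_face_iff)
  then show ?thesis using assms(3) facet_subset_KEdges[OF assms(3)] unfolding is_facet_def by blast
qed

lemma not_set_gt_Min_min2:
  assumes fin: "finite W" and card: "card W \<ge> 3" and Y: "Y \<subseteq> W" "Min W \<in> Y" "card Y \<ge> 2"
  shows "\<not> set_gt {Min W, min2 W} Y"
proof
  assume gt: "set_gt {Min W, min2 W} Y"
  define a m where "a = Min W" and "m = min2 W"
  have "W - {a} \<noteq> {}"
  proof
    assume "W - {a} = {}"
    then have "card W \<le> card {a}" using fin by (intro card_mono) auto
    then show False using card by simp
  qed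
  then have "Min (W - {a}) \<in> W - {a}" using fin by (intro Min_in) auto
  then have m_in: "m \<in> W - {a}" by (simp add: m_def min2_def a_def)
  have m_le: "\<forall>z \<in> W - {a}. m \<le> z" using fin by (simp add: m_def min2_def a_def)
  have "card {a, m} = 2" using m_in by simp
  then have "card Y = 2" and neq: "{a, m} \<noteq> Y" and least: "Min ({a, m} - Y \<union> (Y - {a, m})) \<in> Y"
    using gt Y(3) by (auto simp: set_gt_def a_def m_def)
  then obtain x y where "Y = {x, y}" "x \<noteq> y" by (auto simp: card_2_iff)
  then obtain z where z: "Y = {a, z}" "z \<noteq> a" using Y(2) by (auto simp: a_def doubleton_eq_iff)
  have "z \<in> W - {a}" "m \<noteq> z" using z Y(1) neq by auto
  then have "{a, m} - Y \<union> (Y - {a, m}) = {m, z}" "Min {m, z} = m" using z m_in m_le by (auto simp: min_def)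
  then have "m \<in> Y" using least by simp
  then show False using z \<open>m \<noteq> z\<close> m_in by auto
qed

theorem sigma_not_subset_smaller:
  "finite W \<Longrightarrow> card W \<ge> 2 \<Longrightarrow> is_facet W F \<Longrightarrow> is_facet W G \<Longrightarrow> fac_gt W F G \<Longrightarrow> \<not> sigma W F \<subseteq> G"
proof (induction "card W" arbitrary: W F G rule: less_induct)
  case less
  note fin = less(2) and facet = less(4) and facet' = less(5) and gt = less(6)
  show ?case
  proof (cases "card W \<le> 3")
    case True
    then show ?thesis using gt facet_card_le_3[OF fin True facet] facet_card_le_3[OF fin True facet']
      fac_gt_irrefl by metis
  next
    case False
    then have "card W \<ge> 3" by simp
    then obtain V1 V2 F1 F2 V1' V2' G1 G2 where split: "vertex_split W V1 V2"
      and facets: "is_facet V1 F1" "is_facet V2 F2" and F_eq: "F = glue W F1 F2"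
      and split': "vertex_split W V1' V2'" and facets': "is_facet V1' G1" "is_facet V2' G2"
      and G_eq: "G = glue W G1 G2"
      and cases: "set_gt V1 V1' \<or> V1 = V1' \<and> V2 = V2' \<and> (fac_gt V1 F1 G1 \<or> F1 = G1 \<and> fac_gt V2 F2 G2)"
      by (rule fac_gt_decompose[OF fin _ facet facet' gt])
    interpret vertex_split W V1 V2 by (fact split)
    have sigma: "sigma W F = (if V1 = {Min W, min2 W} then sigma V2 F2
        else sigma V2 F2 \<union> edge_of ` Lset (dtree V1 F1))"
      using sigma_glue[OF facets] F_eq False by simp
    have K: "G1 \<subseteq> KEdges V1'" "G2 \<subseteq> KEdges V2'" using facets' by (auto dest: facet_subset_KEdges)
    consider "set_gt V1 V1'" | "V1 = V1'" "fac_gt V1 F1 G1" | "V2 = V2'" "fac_gt V2 F2 G2"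
      using cases by blast
    then show ?thesis
    proof cases
      case 1
      text \<open>No older part is smaller than \<open>{Min W, min2 W}\<close>, so \<open>L(T(F\<^sup>1))\<close> contributes to \<open>\<sigma>(F)\<close>.\<close>
      have "V1 \<noteq> {Min W, min2 W}"
        using 1 not_set_gt_Min_min2[OF fin \<open>card W \<ge> 3\<close>] vertex_split.V1_subset[OF split']
          vertex_split.Min_in_V1[OF split'] vertex_split.card_V1[OF split'] by auto
      then show ?thesis using Lset_edge_missing[OF facets split' facets' 1] sigma G_eq by auto
    next
      case 2
      then obtain X where X: "X \<in> firstborns (dtree V1 F1)" "edge_of X \<notin> G1"
        using fac_gt_firstborn_edge_missing[OF finite_V1 card_V1 facets(1)] facets'(1) by auto
      then have "X \<subseteq> V1' \<and> finite X \<and> card X \<ge> 2"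
        using dtree_labels[OF finite_V1 card_V1 facets(1)] firstborns_subset_traversal 2(1) by blast
      then have "edge_of X \<notin> G" using vertex_split.edge_of_older_notin_glue[OF split' K(2)] X(2) G_eq by blast
      moreover have "V1 \<noteq> {Min W, min2 W}"
      proof
        assume "V1 = {Min W, min2 W}"
        then have "card V1 \<le> 3" by (simp add: card_insert_if)
        then show False using 2 facet_card_le_3[OF finite_V1] facets(1) facets'(1) fac_gt_irrefl by metis
      qed
      ultimately show ?thesis using sigma X(1) by (auto simp: Lset_def)
    next
      case 3
      then obtain e where e: "e \<in> sigma V2 F2" "e \<notin> G2"
        using less(1)[OF card_V2_less finite_V2 card_V2 facets(2)] facets'(2) by auto
      then have "e \<subseteq> V2'" using sigma_subset[OF finite_V2 card_V2 facets(2)] 3(1) by blast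
      then have "e \<notin> G" using vertex_split.glue_mem_younger[OF split' K(1), of e] e(2) G_eq by blast
      then show ?thesis using sigma e(1) by (auto split: if_splits)
    qed
  qed
qed

section \<open>Condition (SH2)\<close>

definition removable_edge :: "nat set \<Rightarrow> nat set set \<Rightarrow> nat set \<Rightarrow> bool" where
  "removable_edge W F e \<longleftrightarrow> (\<exists>G. is_facet W G \<and> fac_gt W F G \<and> F - G = {e})"

context vertex_split
begin

lemma removable_glue_older:
  assumes facets: "is_facet V1 F1" "is_facet V2 F2" and rem: "removable_edge V1 F1 e"
  shows "removable_edge W (glue W F1 F2) e"
proof -
  obtain G1 where G1: "is_facet V1 G1" "fac_gt V1 F1 G1" "F1 - G1 = {e}"
    using rem by (auto simp: removable_edge_def)
  have "e \<in> KEdges V1" using G1(3) facet_subset_KEdges[OF facets(1)] by blast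
  then have "e \<notin> F2" "e \<noteq> {Min W, Max W}"
    using KEdges_V1_not_V2 facet_subset_KEdges[OF facets(2)] KEdges_subset by blast+
  then have "glue W F1 F2 - glue W G1 F2 = {e}" using G1(3) by blast
  moreover have "fac_gt W (glue W F1 F2) (glue W G1 F2)"
    using fac_gt_glue_iff[OF facets vertex_split_axioms G1(1) facets(2)] G1(2) by simp
  ultimately show ?thesis using glue_is_facet[OF G1(1) facets(2)] by (auto simp: removable_edge_def)
qed

lemma removable_glue_younger:
  assumes facets: "is_facet V1 F1" "is_facet V2 F2" and rem: "removable_edge V2 F2 e"
  shows "removable_edge W (glue W F1 F2) e"
proof -
  obtain G2 where G2: "is_facet V2 G2" "fac_gt V2 F2 G2" "F2 - G2 = {e}"
    using rem by (auto simp: removable_edge_def)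
  have "e \<in> KEdges V2" using G2(3) facet_subset_KEdges[OF facets(2)] by blast
  then have "e \<notin> F1" "e \<noteq> {Min W, Max W}"
    using KEdges_V2_not_V1 facet_subset_KEdges[OF facets(1)] KEdges_subset by blast+
  then have "glue W F1 F2 - glue W F1 G2 = {e}" using G2(3) by blast
  moreover have "fac_gt W (glue W F1 F2) (glue W F1 G2)"
    using fac_gt_glue_iff[OF facets vertex_split_axioms facets(1) G2(1)] G2(2) set_gt_irrefl by simp
  ultimately show ?thesis using glue_is_facet[OF facets(1) G2(1)] by (auto simp: removable_edge_def)
qed

lemma removable_by_smaller_older_part:
  assumes facets: "is_facet V1 F1" "is_facet V2 F2"
    and split': "vertex_split W V1' V2'" and faces: "is_face V1' H1" "is_face V2' H2"
    and cover: "glue W F1 F2 - {e} \<subseteq> glue W H1 H2" and e: "e \<in> glue W F1 F2" "e \<noteq> {Min W, Max W}"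
    and crossing: "\<not> e \<subseteq> V1'" "\<not> e \<subseteq> V2'" and gt: "set_gt V1 V1'"
  shows "removable_edge W (glue W F1 F2) e"
proof -
  interpret S': vertex_split W V1' V2' by (fact split')
  obtain G1 G2 where G1: "is_facet V1' G1" "H1 \<subseteq> G1" and G2: "is_facet V2' G2" "H2 \<subseteq> G2"
    using face_extends_to_facet[OF S'.finite_V1 faces(1)] face_extends_to_facet[OF S'.finite_V2 faces(2)]
    by metis
  have "e \<notin> G1" "e \<notin> G2"
    using crossing facet_subset_KEdges[OF G1(1)] facet_subset_KEdges[OF G2(1)] KEdges_subset by blast+
  then have "glue W F1 F2 - glue W G1 G2 = {e}" using cover e G1(2) G2(2) by blast
  moreover have "fac_gt W (glue W F1 F2) (glue W G1 G2)"
    using fac_gt_glue_iff[OF facets split' G1(1) G2(1)] gt by simp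
  ultimately show ?thesis using S'.glue_is_facet[OF G1(1) G2(1)] by (auto simp: removable_edge_def)
qed

end

context vertex_split
begin

text \<open>For \<open>|V(F\<^sup>1)| \<ge> 3\<close>, splitting \<open>F\<^sup>1 = F\<^sup>1\<^sup>1 \<squnion> F\<^sup>1\<^sup>2 \<squnion> {edge_of V1}\<close> and moving \<open>F\<^sup>1\<^sup>2\<close> to the
  younger side gives the smaller older part \<open>V(F\<^sup>1\<^sup>1)\<close>, which the root edge of \<open>F\<^sup>1\<close> crosses.\<close>

lemma older_root_edge_removable:
  assumes facets: "is_facet V1 F1" "is_facet V2 F2" and card3: "card V1 \<ge> 3"
  shows "removable_edge W (glue W F1 F2) (edge_of V1)"
proof -
  obtain V11 V12 F11 F12 where split1: "vertex_split V1 V11 V12"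
    and facets1: "is_facet V11 F11" "is_facet V12 F12" and F1_eq: "F1 = glue V1 F11 F12"
    using facet_decomposition[OF finite_V1 card3 facets(1)] by blast
  interpret S1: vertex_split V1 V11 V12 by (fact split1)
  have "x \<in> V1 \<inter> V2" if "x \<in> V11" "x \<in> V2" for x using that S1.V1_subset by blast
  then have "V11 \<inter> V2 = {}" using Int_eq S1.Max_notin_V1 by auto
  then have split': "vertex_split W V11 (V12 \<union> V2)"
    using finite_W S1.Un_eq Un_eq S1.Int_eq S1.Min_in_V1 Min_V1 Max_in_V2 S1.V1_subset Max_notin_V1 S1.card_V1
    unfolding vertex_split_def by auto
  have K: "F12 \<subseteq> KEdges V12" "F2 \<subseteq> KEdges V2" using facets1(2) facets(2) by (auto dest: facet_subset_KEdges)
  have cut: "V12 \<inter> V2 = {Max V1}" using S1.V2_subset S1.Max_V2 S1.Max_in_V2 Int_eq by blast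
  have "forbidden_free (F12 \<union> F2)"
    using forbidden_free_Un_cut[OF K cut _ facet_forbidden_free[OF facets1(2)] facet_forbidden_free[OF facets(2)]]
      S1.V2_subset le_cut by blast
  moreover have "F12 \<union> F2 \<subseteq> KEdges (V12 \<union> V2)"
    using K KEdges_mono[of V12 "V12 \<union> V2"] KEdges_mono[of V2 "V12 \<union> V2"] by blast
  ultimately have face2: "is_face (V12 \<union> V2) (F12 \<union> F2)" by (simp add: is_face_iff)
  have e: "edge_of V1 = {Min W, Max V1}" using Min_V1 by (simp add: edge_of_def)
  show ?thesis
  proof (rule removable_by_smaller_older_part[OF facets split' facet_is_face[OF facets1(1)] face2])
    show "glue W F1 F2 - {edge_of V1} \<subseteq> glue W F11 (F12 \<union> F2)" using F1_eq e Min_V1 by auto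
    show "edge_of V1 \<in> glue W F1 F2" using F1_eq e Min_V1 by simp
    show "edge_of V1 \<noteq> {Min W, Max W}" using e cut_less_Max by (simp add: doubleton_eq_iff)
    show "\<not> edge_of V1 \<subseteq> V11" using e S1.Max_notin_V1 by simp
    show "\<not> edge_of V1 \<subseteq> V12 \<union> V2" using e S1.Min_notin_V2 Min_notin_V2 Min_V1 by simp
    show "set_gt V1 V11" using S1.card_V1_less by (rule set_gt_card)
  qed
qed

lemma older_root_edge_removable_card_2:
  assumes facets: "is_facet V1 F1" "is_facet V2 F2" and card2: "card V1 = 2"
    and not_min2: "V1 \<noteq> {Min W, min2 W}"
  shows "removable_edge W (glue W F1 F2) (edge_of V1)"
proof -
  define a z m where "a = Min W" and "z = Max V1" and "m = min2 W"
  have a: "Min W = a" "Min V1 = a" and z: "Max V1 = z" and m: "min2 W = m"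
    using Min_V1 by (simp_all add: a_def z_def m_def)
  have "V1 = {Min V1, Max V1}" by (rule card_2_eq_Min_Max[OF finite_V1 card2])
  then have V1: "V1 = {a, z}" by (simp only: a z)
  have za: "a < z" using Min_less_cut by (simp only: a z)
  have z_W: "z \<in> W" using cut_in_V1 V1_subset z by blast
  have "V2 = W - V1 \<union> {z}" using V2_eq by (simp only: z)
  then have V2: "V2 = W - {a}" using V1 za z_W by auto
  have fin: "finite (W - {a})" using finite_W by simp
  have "z \<in> W - {a}" using z_W za by simp
  then have m_in: "m \<in> W - {a}" and "m \<le> z"
    using Min_in[OF fin] Min_le[OF fin] by (auto simp: m[symmetric] min2_def a(1))
  moreover have "m \<noteq> z" using not_min2 V1 by (auto simp: a m)
  ultimately have mz: "m < z" by simp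
  have am: "a < m" using m_in Min_le_W a(1) by (auto simp: le_neq_implies_less)
  have "Max {a, m} = m" using am by simp
  then have split': "vertex_split W {a, m} V2"
    using finite_W am m_in V2 Max_in_V2 cut_less_Max mz Min_in_W unfolding vertex_split_def by (auto simp: a z)
  have face1: "is_face {a, m} {{a, m}}"
    using am forbidden_free_card_le_3[of "{a, m}" "{{a, m}}"] by (auto simp: is_face_iff KEdges_iff)
  have "F1 = {{Min V1, Max V1}}" by (rule facet_card_2[OF finite_V1 card2 facets(1)])
  then have F1: "F1 = {{a, z}}" by (simp only: a z)
  have e: "edge_of V1 = {a, z}" unfolding edge_of_def by (simp only: a z)
  show ?thesis
  proof (rule removable_by_smaller_older_part[OF facets split' face1 facet_is_face[OF facets(2)]])
    show "glue W F1 F2 - {edge_of V1} \<subseteq> glue W {{a, m}} F2" using F1 e by auto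
    show "edge_of V1 \<in> glue W F1 F2" using F1 e by simp
    show "edge_of V1 \<noteq> {Min W, Max W}" using e cut_less_Max za by (auto simp: a z doubleton_eq_iff)
    show "\<not> edge_of V1 \<subseteq> {a, m}" using e za mz by auto
    show "\<not> edge_of V1 \<subseteq> V2" using e V2 by auto
    have "V1 - {a, m} \<union> ({a, m} - V1) = {m, z}" using V1 za mz am by auto
    then show "set_gt V1 {a, m}" using V1 za mz am by (auto simp: set_gt_def min_def)
  qed
qed

end

definition bridge :: "nat set \<Rightarrow> nat set set \<Rightarrow> nat set \<Rightarrow> bool" where
  "bridge Y F e \<longleftrightarrow> (\<exists>A B. A \<union> B = Y - {Max Y} \<and> A \<inter> B = {} \<and> (\<exists>x y. e = {x, y} \<and> x \<in> A \<and> y \<in> B)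
     \<and> (\<forall>f \<in> F - {e}. f \<subseteq> insert (Max Y) A \<or> f \<subseteq> insert (Max Y) B))"

lemma bridge_memE:
  assumes "bridge Y F e" "u \<in> Y - {Max Y}"
  obtains A B x y where "A \<union> B = Y - {Max Y}" "A \<inter> B = {}" "u \<in> A" "e = {x, y}" "x \<in> A" "y \<in> B"
    "\<forall>f \<in> F - {e}. f \<subseteq> insert (Max Y) A \<or> f \<subseteq> insert (Max Y) B"
proof -
  obtain A B x y where AB: "A \<union> B = Y - {Max Y}" "A \<inter> B = {}" and e: "e = {x, y}" "x \<in> A" "y \<in> B"
    and sides: "\<forall>f \<in> F - {e}. f \<subseteq> insert (Max Y) A \<or> f \<subseteq> insert (Max Y) B"
    using assms(1) by (auto simp: bridge_def)
  show ?thesis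
  proof (cases "u \<in> A")
    case True
    then show ?thesis using that AB e sides by blast
  next
    case False
    then have "u \<in> B" using AB(1) assms(2) by blast
    moreover have "B \<union> A = Y - {Max Y}" "B \<inter> A = {}" "e = {y, x}" using AB e(1) by auto
    ultimately show ?thesis using that e(2,3) sides by blast
  qed
qed

context vertex_split
begin

lemma below_cut: "v \<in> V1 - {Max V1} \<Longrightarrow> v < Max V1"
  using le_cut by (auto simp: order.not_eq_order_implies_strict)

lemma split_older_part:
  assumes AD: "A \<union> D = V1 - {Max V1}" "A \<inter> D = {}" and Min_A: "Min W \<in> A"
  shows "vertex_split W (insert (Max V1) A) (V2 \<union> D)"
proof -
  define c where "c = Max V1"
  have c_in: "c \<in> V1" "c \<in> V2" using cut_in_V1 cut_in_V2 by (simp_all add: c_def)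
  have A_V2: "A \<inter> V2 = {}" using AD Int_eq by (auto simp: c_def)
  have fin_A: "finite (insert c A)" using AD finite_V1 by (auto intro: finite_subset)
  have "A \<subseteq> V1 - {c}" using AD(1) unfolding c_def by blast
  then have "\<forall>v\<in>A. v < c" using below_cut by (auto simp: c_def)
  then have Max_A: "Max (insert c A) = c" using fin_A by (intro Max_eqI) auto
  have "card {Min W, c} \<le> card (insert c A)" using fin_A Min_A by (intro card_mono) auto
  moreover have "Min W \<noteq> c" using Min_less_cut by (simp add: c_def)
  ultimately have card_A: "card (insert c A) \<ge> 2" by simp
  show ?thesis
    unfolding vertex_split_def c_def[symmetric]
  proof (intro conjI)
    show "insert c A \<union> (V2 \<union> D) = W" using AD(1) c_in Un_eq by (auto simp: c_def)
    show "insert c A \<inter> (V2 \<union> D) = {Max (insert c A)}" using Max_A c_in A_V2 AD(2) AD(1) by auto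
    show "Max W \<notin> insert c A" using cut_less_Max AD(1) Max_notin_V1 by (auto simp: c_def)
  qed (use finite_W Min_A Max_in_V2 card_A in auto)
qed

text \<open>A bridge \<open>e\<close> of \<open>F\<^sup>1\<close> separates \<open>V(F\<^sup>1)\<close> into the side \<open>A\<close> of \<open>Min W\<close> and the rest \<open>D\<close>;
  moving \<open>D\<close> and its edges to the younger side leaves \<open>e\<close> crossing the new cut.\<close>

lemma bridge_edge_removable:
  assumes facets: "is_facet V1 F1" "is_facet V2 F2" and bridge: "bridge V1 F1 e" and e_F1: "e \<in> F1"
  shows "removable_edge W (glue W F1 F2) e"
proof -
  define c where "c = Max V1"
  have "Min V1 \<in> V1 - {Max V1}" using Min_V1 Min_in_V1 Min_less_cut by (simp add: less_imp_neq)
  then obtain A D x y where AD: "A \<union> D = V1 - {c}" "A \<inter> D = {}" and Min_A: "Min W \<in> A"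
    and e: "e = {x, y}" "x \<in> A" "y \<in> D" and sides: "\<forall>f \<in> F1 - {e}. f \<subseteq> insert c A \<or> f \<subseteq> insert c D"
    using bridge_memE[OF bridge] Min_V1 unfolding c_def by metis
  have split': "vertex_split W (insert c A) (V2 \<union> D)"
    unfolding c_def by (rule split_older_part[OF AD[unfolded c_def] Min_A])
  have "D \<subseteq> V1 - {c}" using AD(1) by blast
  then have "\<forall>v\<in>D. v < c" using below_cut unfolding c_def by blast
  then have D_le: "\<forall>v\<in>insert c D. v \<le> c" by (auto simp: less_imp_le)
  have c_in: "c \<in> V1" "c \<in> V2" using cut_in_V1 cut_in_V2 by (simp_all add: c_def)
  have A_V2: "A \<inter> V2 = {}" and D_V2: "D \<inter> V2 = {}" using AD Int_eq by (auto simp: c_def)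
  have K: "F1 \<subseteq> KEdges V1" "F2 \<subseteq> KEdges V2" using facets by (auto dest: facet_subset_KEdges)
  define H1 E1 where "H1 = {f \<in> F1. f \<subseteq> insert c A}" and "E1 = {f \<in> F1. f \<subseteq> insert c D}"
  have face1: "is_face (insert c A) H1"
    using K(1) forbidden_free_mono[OF facet_forbidden_free[OF facets(1)]]
    by (auto simp: is_face_iff H1_def KEdges_iff_subset)
  have K_E1: "E1 \<subseteq> KEdges (insert c D)" using K(1) by (auto simp: E1_def KEdges_iff_subset)
  have "insert c D \<inter> V2 = {c}" using D_V2 c_in by auto
  then have "forbidden_free (E1 \<union> F2)"
    using forbidden_free_Un_cut[OF K_E1 K(2) _ D_le] facet_forbidden_free[OF facets(2)]
      forbidden_free_mono[OF facet_forbidden_free[OF facets(1)], of E1] by (auto simp: E1_def)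
  moreover have "E1 \<union> F2 \<subseteq> KEdges (V2 \<union> D)"
    using K_E1 K(2) KEdges_mono[of "insert c D" "V2 \<union> D"] KEdges_mono[of V2 "V2 \<union> D"] c_in by blast
  ultimately have face2: "is_face (V2 \<union> D) (F2 \<union> E1)" by (simp add: is_face_iff Un_commute)
  show ?thesis
  proof (rule removable_by_smaller_older_part[OF facets split' face1 face2])
    show "glue W F1 F2 - {e} \<subseteq> glue W H1 (F2 \<union> E1)" using sides by (auto simp: H1_def E1_def)
    show "e \<in> glue W F1 F2" using e_F1 by simp
    show "e \<noteq> {Min W, Max W}" using KEdges_V1_not_V2 e_F1 K(1) by blast
    show "\<not> e \<subseteq> insert c A" using e AD by (auto simp: c_def)
    show "\<not> e \<subseteq> V2 \<union> D" using e AD A_V2 by auto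
    have "insert c A \<subset> V1" using AD c_in e by (auto simp: c_def)
    then show "set_gt V1 (insert c A)" using finite_V1 by (intro set_gt_card psubset_card_mono)
  qed
qed

end

context vertex_split
begin

lemma bridge_older_root_card_2:
  assumes facets: "is_facet V1 F1" "is_facet V2 F2" and card2: "card V1 = 2"
  shows "bridge W (glue W F1 F2) (edge_of V1)"
proof -
  define a z where "a = Min W" and "z = Max V1"
  have a: "Min W = a" "Min V1 = a" and z: "Max V1 = z" using Min_V1 by (simp_all add: a_def z_def)
  have "V1 = {Min V1, Max V1}" by (rule card_2_eq_Min_Max[OF finite_V1 card2])
  then have V1: "V1 = {a, z}" by (simp only: a z)
  have za: "a < z" using Min_less_cut by (simp only: a z)
  have z_W: "z \<in> W" using cut_in_V1 V1_subset z by blast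
  have "V2 = W - V1 \<union> {z}" using V2_eq by (simp only: z)
  then have V2: "V2 = W - {a}" using V1 za z_W by auto
  have "F1 = {{Min V1, Max V1}}" by (rule facet_card_2[OF finite_V1 card2 facets(1)])
  then have F1: "F1 = {{a, z}}" by (simp only: a z)
  have e: "edge_of V1 = {a, z}" unfolding edge_of_def by (simp only: a z)
  have K2: "F2 \<subseteq> KEdges V2" using facets(2) by (rule facet_subset_KEdges)
  have "z \<noteq> Max W" "a \<noteq> Max W" using cut_less_Max Min_less_Max by (simp_all add: a z)
  show ?thesis unfolding bridge_def
  proof (intro exI conjI)
    show "{a} \<union> (V2 - {Max W}) = W - {Max W}" using V2 Min_in_W \<open>a \<noteq> Max W\<close> by (auto simp: a)
    show "{a} \<inter> (V2 - {Max W}) = {}" using V2 by auto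
    show "edge_of V1 = {a, z}" "a \<in> {a}" "z \<in> V2 - {Max W}" using e V2 z_W za \<open>z \<noteq> Max W\<close> by auto
    show "\<forall>f\<in>glue W F1 F2 - {edge_of V1}. f \<subseteq> insert (Max W) {a} \<or> f \<subseteq> insert (Max W) (V2 - {Max W})"
    proof
      fix f assume "f \<in> glue W F1 F2 - {edge_of V1}"
      then have "f \<in> F2 \<or> f = {a, Max W}" using F1 e by (auto simp: a)
      then show "f \<subseteq> insert (Max W) {a} \<or> f \<subseteq> insert (Max W) (V2 - {Max W})"
        using K2 KEdges_subset by blast
    qed
  qed
qed

lemma bridge_glue_younger:
  assumes facets: "is_facet V1 F1" "is_facet V2 F2" and bridge: "bridge V2 F2 e"
  shows "bridge W (glue W F1 F2) e"
proof -
  have "Max V1 \<in> V2 - {Max V2}" using cut_in_V2 cut_less_Max Max_V2 by simp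
  then obtain A B x y where AB: "A \<union> B = V2 - {Max V2}" "A \<inter> B = {}" "Max V1 \<in> A"
    and e: "e = {x, y}" "x \<in> A" "y \<in> B"
    and sides: "\<forall>f \<in> F2 - {e}. f \<subseteq> insert (Max V2) A \<or> f \<subseteq> insert (Max V2) B"
    by (rule bridge_memE[OF bridge])
  have K1: "F1 \<subseteq> KEdges V1" using facets(1) by (rule facet_subset_KEdges)
  have "v \<notin> B" if "v \<in> V1" for v
  proof
    assume "v \<in> B"
    then have "v \<in> V1 \<inter> V2" using that AB(1) by blast
    then show False using Int_eq AB(2,3) \<open>v \<in> B\<close> by auto
  qed
  then have disjoint: "(A \<union> V1) \<inter> B = {}" using AB(2) by blast
  have cover: "(A \<union> V1) \<union> B = W - {Max W}"
    using AB(1) Un_eq Max_V2 V1_subset Max_notin_V1 by auto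
  show ?thesis unfolding bridge_def
  proof (intro exI conjI)
    show "\<forall>f\<in>glue W F1 F2 - {e}. f \<subseteq> insert (Max W) (A \<union> V1) \<or> f \<subseteq> insert (Max W) B"
    proof
      fix f assume f: "f \<in> glue W F1 F2 - {e}"
      show "f \<subseteq> insert (Max W) (A \<union> V1) \<or> f \<subseteq> insert (Max W) B"
      proof (cases "f \<in> F2")
        case True
        then show ?thesis using sides f Max_V2 by auto
      next
        case False
        then have "f \<in> F1 \<or> f = {Min W, Max W}" using f by auto
        then show ?thesis using K1 KEdges_subset Min_in_V1 by blast
      qed
    qed
  qed (use disjoint cover e in auto)
qed

end

lemma firstborn_edge_removable_or_bridge:
  "finite W \<Longrightarrow> card W \<ge> 2 \<Longrightarrow> is_facet W F \<Longrightarrow> X \<in> firstborns (dtree W F) \<Longrightarrow>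
    removable_edge W F (edge_of X) \<or> bridge W F (edge_of X)"
proof (induction "card W" arbitrary: W F X rule: less_induct)
  case less
  note fin = less(2) and facet = less(4) and X = less(5)
  show ?case
  proof (cases "card W = 2")
    case True
    then show ?thesis using X dtree_card_2[OF fin True facet] by simp
  next
    case False
    then have "card W \<ge> 3" using less(3) by simp
    obtain V1 V2 F1 F2 where split: "vertex_split W V1 V2" and facets: "is_facet V1 F1" "is_facet V2 F2"
      and F_eq: "F = glue W F1 F2" using facet_decomposition[OF fin \<open>card W \<ge> 3\<close> facet] by blast
    interpret vertex_split W V1 V2 by (fact split)
    have "label (dtree V1 F1) = V1" by (rule dtree_label[OF finite_V1 card_V1 facets(1)])
    then consider "X = V1" | "X \<in> firstborns (dtree V1 F1)" | "X \<in> firstborns (dtree V2 F2)"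
      using X dtree_glue[OF facets] F_eq by auto
    then show ?thesis
    proof cases
      case 1
      then show ?thesis
        using older_root_edge_removable[OF facets] bridge_older_root_card_2[OF facets] card_V1 F_eq
        by (cases "card V1 \<ge> 3") auto
    next
      case 2
      then have "removable_edge V1 F1 (edge_of X) \<or> bridge V1 F1 (edge_of X)"
        using less(1)[OF card_V1_less finite_V1 card_V1 facets(1)] by blast
      moreover have "edge_of X \<in> F1" by (rule firstborn_edge_in_facet[OF finite_V1 card_V1 facets(1) 2])
      ultimately show ?thesis
        using removable_glue_older[OF facets] bridge_edge_removable[OF facets] F_eq by blast
    next
      case 3
      then have "removable_edge V2 F2 (edge_of X) \<or> bridge V2 F2 (edge_of X)"
        using less(1)[OF card_V2_less finite_V2 card_V2 facets(2)] by blast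
      then show ?thesis using removable_glue_younger[OF facets] bridge_glue_younger[OF facets] F_eq by blast
    qed
  qed
qed

theorem sigma_edges_removable:
  "finite W \<Longrightarrow> card W \<ge> 2 \<Longrightarrow> is_facet W F \<Longrightarrow> e \<in> sigma W F \<Longrightarrow> removable_edge W F e"
proof (induction "card W" arbitrary: W F e rule: less_induct)
  case less
  note fin = less(2) and facet = less(4) and e = less(5)
  show ?case
  proof (cases "card W = 2")
    case True
    then show ?thesis using e dtree_card_2[OF fin True facet] by (simp add: sigma_def)
  next
    case False
    then have "card W \<ge> 3" using less(3) by simp
    obtain V1 V2 F1 F2 where split: "vertex_split W V1 V2" and facets: "is_facet V1 F1" "is_facet V2 F2"
      and F_eq: "F = glue W F1 F2" using facet_decomposition[OF fin \<open>card W \<ge> 3\<close> facet] by blast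
    interpret vertex_split W V1 V2 by (fact split)
    have sigma: "sigma W F = (if card W \<le> 3 then {} else if V1 = {Min W, min2 W} then sigma V2 F2
        else sigma V2 F2 \<union> edge_of ` Lset (dtree V1 F1))"
      using sigma_glue[OF facets] F_eq by simp
    show ?thesis
    proof (cases "e \<in> sigma V2 F2")
      case True
      then show ?thesis
        using less(1)[OF card_V2_less finite_V2 card_V2 facets(2)] removable_glue_younger[OF facets] F_eq
        by blast
    next
      case False
      then obtain X where not_min2: "V1 \<noteq> {Min W, min2 W}" and X: "X \<in> Lset (dtree V1 F1)" "e = edge_of X"
        using e sigma by (auto split: if_splits)
      have "label (dtree V1 F1) = V1" by (rule dtree_label[OF finite_V1 card_V1 facets(1)])
      then consider "X = V1" | "X \<in> firstborns (dtree V1 F1)" using X(1) by (auto simp: Lset_def)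
      then show ?thesis
      proof cases
        case 1
        then show ?thesis
          using older_root_edge_removable[OF facets] older_root_edge_removable_card_2[OF facets _ not_min2]
            card_V1 F_eq X(2) by (cases "card V1 \<ge> 3") auto
      next
        case 2
        then have "removable_edge V1 F1 e \<or> bridge V1 F1 e"
          using firstborn_edge_removable_or_bridge[OF finite_V1 card_V1 facets(1)] X(2) by blast
        moreover have "e \<in> F1" using firstborn_edge_in_facet[OF finite_V1 card_V1 facets(1) 2] X(2) by simp
        ultimately show ?thesis
          using removable_glue_older[OF facets] bridge_edge_removable[OF facets] F_eq by blast
      qed
    qed
  qed
qed

lemma fac_gt_trans:
  assumes "finite V" "card V \<ge> 2" "is_facet V F" "is_facet V G" "is_facet V H"
    and "fac_gt V F G" "fac_gt V G H"
  shows "fac_gt V F H"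
proof -
  have "\<forall>X \<in> set (traversal (dtree V F)) \<union> set (traversal (dtree V G)) \<union> set (traversal (dtree V H)).
      finite X"
    using dtree_labels[OF assms(1,2)] assms(3-5) by blast
  then show ?thesis using lex_gt_trans assms(6,7) by (simp add: fac_gt_iff_lex_gt)
qed

lemma fac_gt_total:
  assumes "finite V" "card V \<ge> 2" "is_facet V F" "is_facet V G" "F \<noteq> G"
  shows "fac_gt V F G \<or> fac_gt V G F"
proof -
  have "\<forall>X \<in> set (traversal (dtree V F)) \<union> set (traversal (dtree V G)). finite X"
    using dtree_labels[OF assms(1,2)] assms(3,4) by blast
  moreover have "length (traversal (dtree V F)) = length (traversal (dtree V G))"
    using dtree_length[OF assms(1,2)] assms(3,4) by (metis add_right_cancel)
  moreover have "traversal (dtree V F) \<noteq> traversal (dtree V G)"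
    using dtree_edges[OF assms(1,2)] assms(3-5) by metis
  ultimately show ?thesis using lex_gt_total by (simp add: fac_gt_iff_lex_gt)
qed

theorem theorem8p3:
  fixes V :: "nat set"
  assumes "finite V" and "card V \<ge> 2"
  shows "(\<forall>F. is_facet V F \<longrightarrow> \<not> fac_gt V F F)
       \<and> (\<forall>F G H. is_facet V F \<and> is_facet V G \<and> is_facet V H \<and> fac_gt V F G \<and> fac_gt V G H
              \<longrightarrow> fac_gt V F H)
       \<and> (\<forall>F G. is_facet V F \<and> is_facet V G \<and> F \<noteq> G \<longrightarrow> fac_gt V F G \<or> fac_gt V G F)
       \<and> (\<forall>F G. is_facet V F \<and> is_facet V G \<and> fac_gt V F G \<longrightarrow> \<not> sigma V F \<subseteq> G)
       \<and> (\<forall>F e. is_facet V F \<and> e \<in> sigma V F \<longrightarrow>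
              (\<exists>G. is_facet V G \<and> fac_gt V F G \<and> F - G = {e}))"
proof (intro conjI allI impI)
  fix F G H
  show "\<not> fac_gt V F F" by (rule fac_gt_irrefl)
  show "is_facet V F \<and> is_facet V G \<and> is_facet V H \<and> fac_gt V F G \<and> fac_gt V G H \<Longrightarrow> fac_gt V F H"
    using fac_gt_trans[OF assms] by blast
  show "is_facet V F \<and> is_facet V G \<and> F \<noteq> G \<Longrightarrow> fac_gt V F G \<or> fac_gt V G F"
    using fac_gt_total[OF assms] by blast
  show "is_facet V F \<and> is_facet V G \<and> fac_gt V F G \<Longrightarrow> \<not> sigma V F \<subseteq> G"
    using sigma_not_subset_smaller[OF assms] by blast
next
  fix F e
  assume "is_facet V F \<and> e \<in> sigma V F"
  then show "\<exists>G. is_facet V G \<and> fac_gt V F G \<and> F - G = {e}"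
    using sigma_edges_removable[OF assms] by (simp add: removable_edge_def)
qed

end
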